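(* Let $\mathcal{X}\subset\mathbb{R}^d$ be compact with diameter $\ell$. Let $k:\mathbb{R}^d\to\mathbb{R}$ be a continuous positive-definite function with $k(0)=1$ such that the Hessian $\nabla^2 k(0)$ exists, and write $k(x,y):=k(x-y)$. Let $P$ be the probability measure on $\mathbb{R}^d$ with $k(\Delta)=\int e^{\sqrt{-1}\,\omega^\mathsf{T}\Delta}\,\mathrm{d}P(\omega)$. Let $\mathcal{X}_\Delta:=\{x-y: x,y\in\mathcal{X}\}$ and suppose $k$ is $L$-Lipschitz on $\mathcal{X}_\Delta$. Let $D$ be an even positive integer, let $\omega_1,\dots,\omega_{D/2}$ be i.i.d. with law $P$, define $$\tilde z(x):=\sqrt{\tfrac{2}{D}}\,\big(\sin(\omega_1^\mathsf{T}x),\cos(\omega_1^\mathsf{T}x),\dots,\sin(\omega_{D/2}^\mathsf{T}x),\cos(\omega_{D/2}^\mathsf{T}x)\big)^\mathsf{T},$$ $\tilde f(x,y):=\tilde z(x)^\mathsf{T}\tilde z(y)-k(x-y)$, $\|\tilde f\|_\infty:=\sup_{x,y\in\mathcal{X}}|\tilde f(x,y)|$, and $R:=\mathbb{E}\max_{i=1,\dots,D/2}\|\omega_i\|$. Then $$\mathbb{E}\big[\|\tilde f\|_\infty\big]\le\frac{24\gamma\sqrt d\,\ell}{\sqrt D}(R+L),$$ where $\gamma:=4\sqrt\pi\,\operatorname{erfc}(2\sqrt{\log 2})+\sqrt{\log 2}\approx 0.964$.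
   Context: The existence of $P$ follows from Bochner's theorem; $\|\cdot\|$ is the Euclidean norm and $\operatorname{erfc}$ is the complementary error function. *)

theory Defs
  imports "HOL-Analysis.Analysis" "HOL-Probability.Probability"
begin

definition erfc :: "real \<Rightarrow> real" where
  "erfc x = 2 / sqrt pi * integral {x..} (\<lambda>t. exp (- (t\<^sup>2)))"

definition rff_gamma :: real where
  "rff_gamma = 4 * sqrt pi * erfc (2 * sqrt (ln 2)) + sqrt (ln 2)"

definition pos_def_fun :: "('a::real_vector \<Rightarrow> real) \<Rightarrow> bool" where
  "pos_def_fun k \<longleftrightarrow>
     (\<forall>(n::nat) (x::nat \<Rightarrow> 'a) (c::nat \<Rightarrow> complex).
        (\<Sum>i<n. \<Sum>j<n. c i * cnj (c j) * complex_of_real (k (x i - x j))) \<in> \<real> \<and>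
        0 \<le> Re (\<Sum>i<n. \<Sum>j<n. c i * cnj (c j) * complex_of_real (k (x i - x j))))"

definition hessian_exists_at :: "('a::euclidean_space \<Rightarrow> real) \<Rightarrow> 'a \<Rightarrow> bool" where
  "hessian_exists_at k a \<longleftrightarrow>
     (\<exists>g :: 'a \<Rightarrow> 'a. (\<forall>\<^sub>F x in nhds a. (k has_derivative (\<lambda>h. g x \<bullet> h)) (at x))
                       \<and> g differentiable (at a))"

definition rff_feature :: "nat \<Rightarrow> (nat \<Rightarrow> 'a::real_inner) \<Rightarrow> 'a \<Rightarrow> nat \<Rightarrow> real" where
  "rff_feature D \<omega> x j =
     sqrt (2 / real D) * (if even j then sin (\<omega> (j div 2) \<bullet> x) else cos (\<omega> (j div 2) \<bullet> x))"

definition rff_error :: "nat \<Rightarrow> ('a::real_inner \<Rightarrow> real) \<Rightarrow> (nat \<Rightarrow> 'a) \<Rightarrow> 'a \<Rightarrow> 'a \<Rightarrow> real" where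
  "rff_error D k \<omega> x y = (\<Sum>j<D. rff_feature D \<omega> x j * rff_feature D \<omega> y j) - k (x - y)"

end

theory Submission
  imports Defs
begin

text \<open>Write \<open>m = D div 2\<close>. Since \<open>sin a sin b + cos a cos b = cos (a - b)\<close>, the error
  \<open>f(x, y)\<close> equals \<open>s(x - y)\<close> for the empirical process
  \<open>s(t) = (1/m) \<Sum>\<^sub>i cos (\<omega>\<^sub>i \<bullet> t) - k t\<close>, which is centred because \<open>k\<close> is the
  characteristic function of \<open>P\<close>; so it suffices to bound \<open>E sup\<^sub>t \<bar>s t\<bar>\<close> over the
  difference set, which lies in the ball of radius \<open>\<ell>\<close>. This is done by chaining along
  \<open>\<ell>/2\<^sup>j\<close>-nets, of size at most \<open>(1 + 2\<^sup>j\<^sup>+\<^sup>1)\<^sup>d\<close> by a volume argument. The increments along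
  one level form a finite family of centred sums; symmetrization followed by Massart's
  finite class lemma bounds their expected maximum, because \<open>t \<mapsto> cos (\<omega> \<bullet> t)\<close> is
  \<open>\<parallel>\<omega>\<parallel>\<close>-Lipschitz. After \<open>m\<close> levels the remainder is controlled by the Lipschitz constant
  \<open>max\<^sub>i \<parallel>\<omega>\<^sub>i\<parallel> + L\<close> of \<open>s\<close>. Summing the levels yields the constant
  \<open>(9 \<surd>2 + 1) \<surd>d \<ell> / \<surd>m\<close>, and \<open>(9 \<surd>2 + 1) \<surd>2 = 18 + \<surd>2 \<le> 24 \<gamma>\<close>.\<close>

section \<open>Rademacher averages and Massart's lemma\<close>

definition sign_pattern :: "'i set \<Rightarrow> 'i \<Rightarrow> real" where
  "sign_pattern E i = (if i \<in> E then -1 else 1)"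

text \<open>The subsets \<open>E \<subseteq> I\<close> enumerate the \<open>2 ^ card I\<close> Rademacher sign vectors, so this is the
  expectation of \<open>max\<^sub>j \<bar>\<Sum>\<^sub>i \<epsilon>\<^sub>i b\<^sub>j\<^sub>i\<bar>\<close> over independent uniform signs \<open>\<epsilon>\<close>.\<close>
definition rademacher_average :: "'i set \<Rightarrow> 'j set \<Rightarrow> ('j \<Rightarrow> 'i \<Rightarrow> real) \<Rightarrow> real" where
  "rademacher_average I J b =
     (\<Sum>E\<in>Pow I. Max ((\<lambda>j. \<bar>\<Sum>i\<in>I. sign_pattern E i * b j i\<bar>) ` J)) / 2 ^ card I"

lemma sum_Pow_prod_mem:
  fixes f :: "'i \<Rightarrow> bool \<Rightarrow> real"
  assumes "finite I"
  shows "(\<Sum>E\<in>Pow I. \<Prod>i\<in>I. f i (i \<in> E)) = (\<Prod>i\<in>I. f i True + f i False)"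
  using assms
proof (induction I rule: finite_induct)
  case empty
  then show ?case by simp
next
  case (insert a I)
  have disjoint: "Pow I \<inter> insert a ` Pow I = {}" and inj: "inj_on (insert a) (Pow I)"
    using insert by (auto simp: inj_on_def)
  have without_a: "(\<Prod>i\<in>insert a I. f i (i \<in> E)) = f a False * (\<Prod>i\<in>I. f i (i \<in> E))"
    if "E \<in> Pow I" for E
  proof -
    have "a \<notin> E"
      using that insert(2) by auto
    then show ?thesis
      using insert(1,2) by simp
  qed
  have with_a: "(\<Prod>i\<in>insert a I. f i (i \<in> insert a E)) = f a True * (\<Prod>i\<in>I. f i (i \<in> E))"
    for E
  proof -
    have "i \<in> insert a E \<longleftrightarrow> i \<in> E" if "i \<in> I" for i
      using that insert(2) by auto
    then have "(\<Prod>i\<in>I. f i (i \<in> insert a E)) = (\<Prod>i\<in>I. f i (i \<in> E))"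
      by (intro prod.cong) simp_all
    then show ?thesis
      using insert(1,2) by simp
  qed
  have "(\<Sum>E\<in>Pow (insert a I). \<Prod>i\<in>insert a I. f i (i \<in> E))
      = (\<Sum>E\<in>Pow I. \<Prod>i\<in>insert a I. f i (i \<in> E))
        + (\<Sum>E\<in>Pow I. \<Prod>i\<in>insert a I. f i (i \<in> insert a E))"
    unfolding Pow_insert using disjoint inj insert(1) by (simp add: sum.union_disjoint sum.reindex)
  also have "\<dots> = (f a True + f a False) * (\<Sum>E\<in>Pow I. \<Prod>i\<in>I. f i (i \<in> E))"
    by (simp only: without_a with_a cong: sum.cong) (simp add: sum_distrib_left sum.distrib algebra_simps)
  finally show ?case
    using insert by simp
qed

lemma exp_plus_exp_uminus_le: "exp x + exp (- x) \<le> 2 * exp (x\<^sup>2 / 2)" for x :: real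
proof -
  have nonneg_case: "exp y + exp (- y) \<le> 2 * exp (y\<^sup>2 / 2)" if "y \<ge> 0" for y :: real
  proof -
    \<comment> \<open>Hoeffding's lemma for a fair \<open>\<plusminus>1\<close> coin\<close>
    have "- (2 * y) * (1 / 2) + ln (1 + (1 / 2) * (exp (2 * y) - 1)) \<le> (2 * y)\<^sup>2 / 8"
      by (rule Hoeffdings_lemma_aux) (use that in auto)
    then have "ln ((1 + exp (2 * y)) / 2) \<le> y + y\<^sup>2 / 2"
      by (simp add: power2_eq_square field_simps)
    then have "(1 + exp (2 * y)) / 2 \<le> exp (y + y\<^sup>2 / 2)"
      by (metis add_pos_pos exp_gt_zero exp_le_cancel_iff exp_ln half_gt_zero zero_less_one)
    then have "(1 + exp (2 * y)) / 2 * exp (- y) \<le> exp (y + y\<^sup>2 / 2) * exp (- y)"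
      by (intro mult_right_mono) auto
    then show ?thesis
      by (simp add: field_simps flip: exp_add)
  qed
  show ?thesis
    using nonneg_case[of x] nonneg_case[of "- x"] by (cases "x \<ge> 0") (auto simp: add.commute)
qed

lemma sum_Pow_exp_sign_pattern_le:
  assumes "finite I"
  shows "(\<Sum>E\<in>Pow I. exp (\<Sum>i\<in>I. sign_pattern E i * x i))
           \<le> 2 ^ card I * exp ((\<Sum>i\<in>I. (x i)\<^sup>2) / 2)"
proof -
  have "(\<Sum>E\<in>Pow I. exp (\<Sum>i\<in>I. sign_pattern E i * x i))
      = (\<Sum>E\<in>Pow I. \<Prod>i\<in>I. (\<lambda>i b. exp (if b then - x i else x i)) i (i \<in> E))"
    using assms by (auto simp: exp_sum sign_pattern_def intro!: sum.cong prod.cong)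
  also have "\<dots> = (\<Prod>i\<in>I. exp (x i) + exp (- x i))"
    using assms by (subst sum_Pow_prod_mem) (auto simp: add.commute)
  also have "\<dots> \<le> (\<Prod>i\<in>I. 2 * exp ((x i)\<^sup>2 / 2))"
    by (intro prod_mono conjI add_nonneg_nonneg exp_plus_exp_uminus_le) auto
  also have "\<dots> = 2 ^ card I * exp ((\<Sum>i\<in>I. (x i)\<^sup>2) / 2)"
    using assms by (simp add: prod.distrib exp_sum sum_divide_distrib)
  finally show ?thesis .
qed

lemma Max_abs_sum_le:
  assumes "finite J" "J \<noteq> {}" and "\<And>j i. j \<in> J \<Longrightarrow> i \<in> I \<Longrightarrow> \<bar>g j i\<bar> \<le> C"
  shows "Max ((\<lambda>j. \<bar>\<Sum>i\<in>I. g j i\<bar>) ` J) \<le> real (card I) * C"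
proof -
  have "\<bar>\<Sum>i\<in>I. g j i\<bar> \<le> real (card I) * C" if "j \<in> J" for j
  proof -
    have "\<bar>\<Sum>i\<in>I. g j i\<bar> \<le> (\<Sum>i\<in>I. \<bar>g j i\<bar>)"
      by (rule sum_abs)
    also have "\<dots> \<le> real (card I) * C"
      using assms(3)[OF that] by (rule sum_bounded_above)
    finally show ?thesis .
  qed
  then show ?thesis
    using assms(1,2) by simp
qed

lemma Max_abs_nonneg:
  assumes "finite J" "J \<noteq> {}"
  shows "0 \<le> Max ((\<lambda>j. \<bar>f j :: real\<bar>) ` J)"
  using assms by (auto simp: Max_ge_iff)

lemma rademacher_average_nonneg:
  assumes "finite J" "J \<noteq> {}"
  shows "0 \<le> rademacher_average I J b"
  unfolding rademacher_average_def using assms by (intro divide_nonneg_pos sum_nonneg Max_abs_nonneg) auto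

lemma rademacher_average_le:
  assumes "finite I" and "\<And>j i. j \<in> J \<Longrightarrow> i \<in> I \<Longrightarrow> \<bar>b j i\<bar> \<le> C"
    and "finite J" "J \<noteq> {}"
  shows "rademacher_average I J b \<le> real (card I) * C"
proof -
  have "Max ((\<lambda>j. \<bar>\<Sum>i\<in>I. sign_pattern E i * b j i\<bar>) ` J) \<le> real (card I) * C" for E
    using assms(2-4) by (intro Max_abs_sum_le) (auto simp: abs_mult sign_pattern_def)
  then have "(\<Sum>E\<in>Pow I. Max ((\<lambda>j. \<bar>\<Sum>i\<in>I. sign_pattern E i * b j i\<bar>) ` J))
               \<le> real (card (Pow I)) * (real (card I) * C)"
    by (intro sum_bounded_above)
  then show ?thesis
    unfolding rademacher_average_def using assms(1) by (simp add: card_Pow divide_le_eq mult.commute)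
qed

lemma exp_mult_Max_abs_le:
  assumes "finite J" "J \<noteq> {}" "0 \<le> l"
  shows "exp (l * Max ((\<lambda>j. \<bar>f j :: real\<bar>) ` J)) \<le> (\<Sum>j\<in>J. exp (l * f j) + exp (- (l * f j)))"
proof -
  have "Max ((\<lambda>j. \<bar>f j\<bar>) ` J) \<in> (\<lambda>j. \<bar>f j\<bar>) ` J"
    using assms(1,2) by (intro Max_in) auto
  then obtain j where j: "j \<in> J" "Max ((\<lambda>j. \<bar>f j\<bar>) ` J) = \<bar>f j\<bar>"
    by auto
  have "exp (l * \<bar>f j\<bar>) \<le> exp (l * f j) + exp (- (l * f j))"
    by (cases "0 \<le> f j") (auto intro: add_increasing add_increasing2)
  also have "\<dots> \<le> (\<Sum>j\<in>J. exp (l * f j) + exp (- (l * f j)))"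
    using assms(1) j(1) by (intro member_le_sum) (auto intro: add_nonneg_nonneg)
  finally show ?thesis
    using j(2) by simp
qed

lemma exp_rademacher_average_le:
  assumes I: "finite I" and J: "finite J" "J \<noteq> {}" and l: "l \<ge> 0"
    and b: "\<And>j. j \<in> J \<Longrightarrow> (\<Sum>i\<in>I. (b j i)\<^sup>2) \<le> \<sigma>\<^sup>2"
  shows "exp (l * rademacher_average I J b) \<le> 2 * real (card J) * exp (l\<^sup>2 * \<sigma>\<^sup>2 / 2)"
proof -
  define N :: real where "N = 2 ^ card I"
  define Y where "Y E = Max ((\<lambda>j. \<bar>\<Sum>i\<in>I. sign_pattern E i * b j i\<bar>) ` J)" for E
  define mgf where "mgf c j = (\<Sum>E\<in>Pow I. exp (\<Sum>i\<in>I. sign_pattern E i * (c * b j i)))" for c j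
  have N: "N > 0" "card (Pow I) = N"
    using I by (simp_all add: N_def card_Pow)
  have mgf_le: "mgf c j \<le> N * exp (l\<^sup>2 * \<sigma>\<^sup>2 / 2)" if "j \<in> J" "\<bar>c\<bar> = l" for c j
  proof -
    have "(\<Sum>i\<in>I. (c * b j i)\<^sup>2) = l\<^sup>2 * (\<Sum>i\<in>I. (b j i)\<^sup>2)"
      using that(2) by (auto simp: power_mult_distrib sum_distrib_left)
    also have "\<dots> \<le> l\<^sup>2 * \<sigma>\<^sup>2"
      using b[OF that(1)] by (intro mult_left_mono) auto
    finally have "exp ((\<Sum>i\<in>I. (c * b j i)\<^sup>2) / 2) \<le> exp (l\<^sup>2 * \<sigma>\<^sup>2 / 2)"
      by simp
    then show ?thesis
      using sum_Pow_exp_sign_pattern_le[OF I, of "\<lambda>i. c * b j i"] N(1)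
      unfolding mgf_def N_def by (smt (verit) mult_left_mono)
  qed
  have exp_Y_le: "exp (l * Y E) \<le> (\<Sum>j\<in>J. exp (\<Sum>i\<in>I. sign_pattern E i * (l * b j i))
                                         + exp (\<Sum>i\<in>I. sign_pattern E i * (- l * b j i)))" for E
    using exp_mult_Max_abs_le[OF J l, of "\<lambda>j. \<Sum>i\<in>I. sign_pattern E i * b j i"]
    unfolding Y_def by (simp add: sum_distrib_left sum_negf mult.left_commute)
  have "exp (l * rademacher_average I J b) = exp (\<Sum>E\<in>Pow I. (1 / N) *\<^sub>R (l * Y E))"
    by (simp add: rademacher_average_def Y_def N_def sum_distrib_left sum_divide_distrib)
  also have "\<dots> \<le> (\<Sum>E\<in>Pow I. (1 / N) * exp (l * Y E))"
    using I N by (intro convex_on_sum[OF _ _ exp_convex]) auto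
  also have "\<dots> \<le> (\<Sum>E\<in>Pow I. (1 / N) * (\<Sum>j\<in>J. exp (\<Sum>i\<in>I. sign_pattern E i * (l * b j i))
                                         + exp (\<Sum>i\<in>I. sign_pattern E i * (- l * b j i))))"
    using N(1) by (intro sum_mono mult_left_mono exp_Y_le) auto
  also have "\<dots> = (1 / N) * (\<Sum>j\<in>J. mgf l j + mgf (- l) j)"
    unfolding mgf_def sum_distrib_left[symmetric] sum.distrib by (subst (1 2) sum.swap) simp
  also have "\<dots> \<le> (1 / N) * (\<Sum>j\<in>J. 2 * (N * exp (l\<^sup>2 * \<sigma>\<^sup>2 / 2)))"
  proof (intro mult_left_mono sum_mono)
    fix j assume "j \<in> J"
    then show "mgf l j + mgf (- l) j \<le> 2 * (N * exp (l\<^sup>2 * \<sigma>\<^sup>2 / 2))"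
      using mgf_le[of j l] mgf_le[of j "- l"] l by simp
  qed (use N in auto)
  also have "\<dots> = 2 * real (card J) * exp (l\<^sup>2 * \<sigma>\<^sup>2 / 2)"
    using N(1) by simp
  finally show ?thesis .
qed

lemma massart_finite_class:
  assumes I: "finite I" and J: "finite J" "J \<noteq> {}" and \<sigma>: "\<sigma> \<ge> 0"
    and b: "\<And>j. j \<in> J \<Longrightarrow> (\<Sum>i\<in>I. (b j i)\<^sup>2) \<le> \<sigma>\<^sup>2"
  shows "rademacher_average I J b \<le> \<sigma> * sqrt (2 * ln (2 * real (card J)))"
proof (cases "\<sigma> = 0")
  case True
  have "b j i = 0" if "j \<in> J" "i \<in> I" for j i
  proof -
    have "(\<Sum>i\<in>I. (b j i)\<^sup>2) = 0"
      using b[OF that(1)] True by (intro antisym sum_nonneg) auto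
    then show ?thesis
      using I that(2) by (simp add: sum_nonneg_eq_0_iff)
  qed
  then show ?thesis
    unfolding rademacher_average_def using True J by (simp cong: image_cong)
next
  case False
  define s where "s = sqrt (2 * ln (2 * real (card J)))"
  define l where "l = s / \<sigma>"
  have card_J: "1 \<le> card J"
    using J by (simp add: Suc_le_eq card_gt_0_iff)
  then have s: "s > 0" "s\<^sup>2 = 2 * ln (2 * real (card J))"
    by (simp_all add: s_def)
  have l: "l > 0"
    using s \<sigma> False by (simp add: l_def)
  have "l * rademacher_average I J b \<le> ln (2 * real (card J) * exp (l\<^sup>2 * \<sigma>\<^sup>2 / 2))"
    using exp_rademacher_average_le[OF I J less_imp_le[OF l] b] card_J
    by (subst ln_ge_iff) auto
  also have "\<dots> = l * (\<sigma> * s)"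
    using card_J s \<sigma> False by (simp add: ln_mult l_def field_simps power2_eq_square)
  finally show ?thesis
    using l by (simp add: s_def)
qed

section \<open>Packing and covering in Euclidean space\<close>

lemma card_separated_le:
  fixes N :: "'a::euclidean_space set"
  assumes fin: "finite N" and sub: "N \<subseteq> cball 0 l" and e: "e > 0" and l: "l \<ge> 0"
    and sep: "\<And>u v. u \<in> N \<Longrightarrow> v \<in> N \<Longrightarrow> u \<noteq> v \<Longrightarrow> dist u v \<ge> e"
  shows "real (card N) \<le> (1 + 2 * l / e) ^ DIM('a)"
proof -
  define c where "c = unit_ball_vol (real DIM('a))"
  have c: "c > 0"
    by (simp add: c_def)
  have disjoint: "disjoint_family_on (\<lambda>u. ball u (e / 2)) N"
    unfolding disjoint_family_on_def
  proof (intro ballI impI equals0I)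
    fix u v x assume uv: "u \<in> N" "v \<in> N" "u \<noteq> v" and "x \<in> ball u (e / 2) \<inter> ball v (e / 2)"
    then have "dist u v < e"
      using dist_triangle[of u v x] dist_commute[of v x] by auto
    then show False
      using sep[OF uv] by simp
  qed
  have "(\<Union>u\<in>N. ball u (e / 2)) \<subseteq> ball 0 (l + e / 2)"
  proof
    fix x assume "x \<in> (\<Union>u\<in>N. ball u (e / 2))"
    then obtain u where "u \<in> N" "dist u x < e / 2"
      by auto
    moreover have "dist 0 x \<le> dist 0 u + dist u x"
      by (rule dist_triangle)
    ultimately show "x \<in> ball 0 (l + e / 2)"
      using sub by auto
  qed
  then have "(\<Sum>u\<in>N. emeasure lborel (ball u (e / 2))) \<le> emeasure lborel (ball (0::'a) (l + e / 2))"
    using disjoint fin by (subst sum_emeasure) (auto intro: emeasure_mono)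
  then have "ennreal (real (card N) * (c * (e / 2) ^ DIM('a))) \<le> ennreal (c * (l + e / 2) ^ DIM('a))"
    using e l c by (simp add: emeasure_ball c_def ennreal_mult ennreal_of_nat_eq_real_of_nat)
  then have "real (card N) * (e / 2) ^ DIM('a) \<le> (l + e / 2) ^ DIM('a)"
    using c e l by (subst (asm) ennreal_le_iff) (auto simp: algebra_simps)
  then have "real (card N) \<le> (l + e / 2) ^ DIM('a) / (e / 2) ^ DIM('a)"
    using e by (simp add: field_simps)
  also have "\<dots> = ((l + e / 2) / (e / 2)) ^ DIM('a)"
    by (simp only: power_divide)
  also have "(l + e / 2) / (e / 2) = 1 + 2 * l / e"
    using e by (simp add: field_simps)
  finally show ?thesis .
qed

text \<open>A maximal \<open>e\<close>-separated subset of \<open>T\<close> is an \<open>e\<close>-net; it exists because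
  \<open>card_separated_le\<close> bounds the size of all separated subsets.\<close>
lemma finite_net_exists:
  fixes T :: "'a::euclidean_space set"
  assumes sub: "T \<subseteq> cball 0 l" and ne: "T \<noteq> {}" and e: "e > 0" and l: "l \<ge> 0"
  shows "\<exists>N. finite N \<and> N \<subseteq> T \<and> N \<noteq> {} \<and> real (card N) \<le> (1 + 2 * l / e) ^ DIM('a)
             \<and> (\<forall>t\<in>T. \<exists>u\<in>N. dist t u < e)"
proof -
  define separated where "separated N \<longleftrightarrow> finite N \<and> N \<subseteq> T \<and> N \<noteq> {} \<and>
      (\<forall>u\<in>N. \<forall>v\<in>N. u \<noteq> v \<longrightarrow> dist u v \<ge> e)" for N
  obtain t0 where t0: "t0 \<in> T"
    using ne by auto
  have separated_singleton: "separated {t0}"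
    using t0 by (simp add: separated_def)
  have card_le: "real (card N) \<le> (1 + 2 * l / e) ^ DIM('a)" if "separated N" for N
    using that sub by (intro card_separated_le[OF _ _ e l]) (auto simp: separated_def)
  have "card N < nat \<lceil>(1 + 2 * l / e) ^ DIM('a)\<rceil> + 1" if "separated N" for N
  proof -
    have "real (card N) \<le> of_int \<lceil>(1 + 2 * l / e) ^ DIM('a)\<rceil>"
      using card_le[OF that] le_of_int_ceiling order_trans by blast
    then have "int (card N) \<le> \<lceil>(1 + 2 * l / e) ^ DIM('a)\<rceil>"
      by linarith
    then show ?thesis
      by linarith
  qed
  then obtain N where N: "separated N" "\<And>N'. separated N' \<Longrightarrow> card N' \<le> card N"
    using ex_has_greatest_nat[of separated "{t0}" card] separated_singleton by blast
  have "\<exists>u\<in>N. dist t u < e" if t: "t \<in> T" for t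
  proof (rule ccontr)
    assume "\<not> (\<exists>u\<in>N. dist t u < e)"
    then have far: "\<And>u. u \<in> N \<Longrightarrow> dist t u \<ge> e"
      by (auto simp: not_less)
    then have "t \<notin> N"
      using e by force
    moreover have "separated (insert t N)"
      using N(1) t far by (auto simp: separated_def dist_commute)
    then have "card (insert t N) \<le> card N"
      by (rule N(2))
    ultimately show False
      using N(1) by (simp add: separated_def)
  qed
  then show ?thesis
    using N(1) card_le[OF N(1)] by (auto simp: separated_def)
qed

section \<open>Symmetrization\<close>

lemma integral_PiM_reindex:
  fixes g :: "('i \<Rightarrow> 'a) \<Rightarrow> real"
  assumes "prob_space P" "inj_on \<sigma> K" "\<sigma> \<in> K \<rightarrow> K"
    and g: "g \<in> borel_measurable (PiM K (\<lambda>_. P))"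
  shows "(\<integral>v. g (\<lambda>n\<in>K. v (\<sigma> n)) \<partial>PiM K (\<lambda>_. P)) = (\<integral>v. g v \<partial>PiM K (\<lambda>_. P))"
proof -
  have reindex: "(\<lambda>v. \<lambda>n\<in>K. v (\<sigma> n)) \<in> measurable (PiM K (\<lambda>_. P)) (PiM K (\<lambda>_. P))"
    using assms(3) by (intro measurable_restrict measurable_component_singleton) auto
  have "distr (PiM K (\<lambda>_. P)) (PiM K (\<lambda>_. P)) (\<lambda>v. \<lambda>n\<in>K. v (\<sigma> n)) = PiM K (\<lambda>_. P)"
    using distr_PiM_reindex[of K "\<lambda>_. P" \<sigma> K] assms(1-3) by simp
  then show ?thesis
    using integral_distr[OF reindex g] by simp
qed

lemma integrable_bounded_prob:
  fixes f :: "'a \<Rightarrow> real"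
  assumes "prob_space M" "f \<in> borel_measurable M" "\<And>x. \<bar>f x\<bar> \<le> C"
  shows "integrable M f"
proof -
  interpret prob_space M
    by (fact assms(1))
  show ?thesis
    using assms(2,3) by (intro integrable_const_bound[where B = C]) auto
qed

lemma integral_PiM_restrict:
  fixes g :: "('i \<Rightarrow> 'a) \<Rightarrow> real"
  assumes "prob_space P" "finite K" "I \<subseteq> K" and g: "g \<in> borel_measurable (PiM I (\<lambda>_. P))"
  shows "(\<integral>v. g (restrict v I) \<partial>PiM K (\<lambda>_. P)) = (\<integral>v. g v \<partial>PiM I (\<lambda>_. P))"
proof -
  interpret product_prob_space "\<lambda>_::'i. P"
    by (rule product_prob_spaceI) (rule assms(1))
  have restrict: "(\<lambda>v. restrict v I) \<in> measurable (PiM K (\<lambda>_. P)) (PiM I (\<lambda>_. P))"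
    using assms(3) by (rule measurable_restrict_subset)
  have "distr (PiM K (\<lambda>_. P)) (PiM I (\<lambda>_. P)) (\<lambda>v. restrict v I) = PiM I (\<lambda>_. P)"
    using distr_restrict[OF assms(3,2)] by simp
  then show ?thesis
    using integral_distr[OF restrict g] by simp
qed

definition swap_ghost :: "nat \<Rightarrow> nat set \<Rightarrow> nat \<Rightarrow> nat" where
  "swap_ghost m E n = (if n \<in> E then n + m else if m \<le> n \<and> n - m \<in> E then n - m else n)"

lemma swap_ghost_permutes:
  assumes "E \<subseteq> {..<m}"
  shows "inj_on (swap_ghost m E) {..<2 * m}" "swap_ghost m E \<in> {..<2 * m} \<rightarrow> {..<2 * m}"
proof -
  have "swap_ghost m E (swap_ghost m E n) = n" for n
    using assms by (auto simp: swap_ghost_def subset_iff)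
  then show "inj_on (swap_ghost m E) {..<2 * m}"
    by (rule inj_on_inverseI)
  show "swap_ghost m E \<in> {..<2 * m} \<rightarrow> {..<2 * m}"
    using assms by (auto simp: swap_ghost_def subset_iff)
qed

locale bounded_family = prob_space P for P :: "'a measure" +
  fixes J :: "'j set" and h :: "'j \<Rightarrow> 'a \<Rightarrow> real" and B :: real
  assumes finite_J: "finite J" and J_not_empty: "J \<noteq> {}"
    and borel_measurable_h [measurable]: "\<And>j. h j \<in> borel_measurable P"
    and abs_h_le: "\<And>j w. \<bar>h j w\<bar> \<le> B"
begin

abbreviation iid :: "nat set \<Rightarrow> (nat \<Rightarrow> 'a) measure" where
  "iid I \<equiv> PiM I (\<lambda>_. P)"

definition max_deviation :: "nat \<Rightarrow> (nat \<Rightarrow> 'a) \<Rightarrow> real" where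
  "max_deviation m \<omega> = Max ((\<lambda>j. \<bar>\<Sum>i<m. h j (\<omega> i) - (\<integral>w. h j w \<partial>P)\<bar>) ` J)"

text \<open>Coordinates \<open>i < m\<close> of \<open>v\<close> are the sample, coordinates \<open>i + m\<close> an independent ghost
  sample; the signs in \<open>E\<close> exchange the two.\<close>
definition max_ghost_difference :: "nat \<Rightarrow> nat set \<Rightarrow> (nat \<Rightarrow> 'a) \<Rightarrow> real" where
  "max_ghost_difference m E v =
     Max ((\<lambda>j. \<bar>\<Sum>i<m. sign_pattern E i * (h j (v i) - h j (v (i + m)))\<bar>) ` J)"

lemma prob_space_iid: "prob_space (iid I)"
  by (intro prob_space_PiM prob_space_axioms)

lemma borel_measurable_max_deviation [measurable]:
  "max_deviation m \<in> borel_measurable (iid {..<m})"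
  unfolding max_deviation_def using finite_J by measurable

lemma borel_measurable_max_ghost_difference [measurable]:
  "max_ghost_difference m E \<in> borel_measurable (iid {..<2 * m})"
  unfolding max_ghost_difference_def using finite_J by measurable

lemma borel_measurable_rademacher_average:
  fixes m :: nat
  assumes "\<And>i. i < m \<Longrightarrow> f i \<in> K"
  shows "(\<lambda>v. rademacher_average {..<m} J (\<lambda>j i. h j (v (f i)))) \<in> borel_measurable (iid K)"
  unfolding rademacher_average_def using finite_J by measurable (use assms in auto)

lemma borel_measurable_h_component:
  "i \<in> K \<Longrightarrow> (\<lambda>v. h j (v i)) \<in> borel_measurable (iid K)"
  by measurable

lemma abs_integral_h_le: "\<bar>\<integral>w. h j w \<partial>P\<bar> \<le> B"
proof -
  have "\<bar>\<integral>w. h j w \<partial>P\<bar> \<le> (\<integral>w. \<bar>h j w\<bar> \<partial>P)"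
    by (rule integral_abs_bound)
  also have "\<dots> \<le> (\<integral>w. B \<partial>P)"
    by (intro integral_mono) (auto simp: abs_h_le intro!: integrable_const_bound[where B = B])
  finally show ?thesis
    by (simp add: prob_space)
qed

lemma max_deviation_nonneg: "0 \<le> max_deviation m \<omega>"
  unfolding max_deviation_def by (rule Max_abs_nonneg[OF finite_J J_not_empty])

lemma abs_max_deviation_le: "\<bar>max_deviation m \<omega>\<bar> \<le> m * (2 * B)"
proof -
  have "\<bar>h j (\<omega> i) - (\<integral>w. h j w \<partial>P)\<bar> \<le> 2 * B" for j i
    using abs_h_le[of j "\<omega> i"] abs_integral_h_le[of j] by linarith
  then have "max_deviation m \<omega> \<le> real (card {..<m}) * (2 * B)"
    unfolding max_deviation_def by (intro Max_abs_sum_le[OF finite_J J_not_empty])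
  then show ?thesis
    using max_deviation_nonneg[of m \<omega>] by simp
qed

lemma abs_max_ghost_difference_le: "\<bar>max_ghost_difference m E v\<bar> \<le> m * (2 * B)"
proof -
  have "\<bar>sign_pattern E i * (h j (v i) - h j (v (i + m)))\<bar> \<le> 2 * B" for j i
    using abs_h_le[of j "v i"] abs_h_le[of j "v (i + m)"] by (auto simp: sign_pattern_def abs_le_iff)
  then have "max_ghost_difference m E v \<le> real (card {..<m}) * (2 * B)"
    unfolding max_ghost_difference_def by (intro Max_abs_sum_le[OF finite_J J_not_empty])
  moreover have "0 \<le> max_ghost_difference m E v"
    unfolding max_ghost_difference_def by (rule Max_abs_nonneg[OF finite_J J_not_empty])
  ultimately show ?thesis
    by simp
qed

lemma integrable_max_deviation: "integrable (iid {..<m}) (max_deviation m)"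
  by (rule integrable_bounded_prob[OF prob_space_iid borel_measurable_max_deviation abs_max_deviation_le])

lemma integrable_max_ghost_difference: "integrable (iid {..<2 * m}) (max_ghost_difference m E)"
  by (rule integrable_bounded_prob[OF prob_space_iid borel_measurable_max_ghost_difference
      abs_max_ghost_difference_le])

lemma integrable_rademacher_average:
  fixes m :: nat
  assumes "\<And>i. i < m \<Longrightarrow> f i \<in> K"
  shows "integrable (iid K) (\<lambda>v. rademacher_average {..<m} J (\<lambda>j i. h j (v (f i))))"
proof (rule integrable_bounded_prob[OF prob_space_iid borel_measurable_rademacher_average[OF assms]])
  fix v
  have "rademacher_average {..<m} J (\<lambda>j i. h j (v (f i))) \<le> real (card {..<m}) * B"
    using abs_h_le by (intro rademacher_average_le finite_J J_not_empty) auto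
  then show "\<bar>rademacher_average {..<m} J (\<lambda>j i. h j (v (f i)))\<bar> \<le> m * B"
    using rademacher_average_nonneg[OF finite_J J_not_empty, of "{..<m}" "\<lambda>j i. h j (v (f i))"] by simp
qed

lemma integral_ghost_coordinate:
  assumes "i < m"
  shows "(\<integral>y. h j (y (i + m)) \<partial>iid {m..<2 * m}) = (\<integral>w. h j w \<partial>P)"
proof -
  have component: "(\<lambda>y. y (i + m)) \<in> measurable (iid {m..<2 * m}) P"
    by measurable (use assms in auto)
  have "distr (iid {m..<2 * m}) P (\<lambda>y. y (i + m)) = P"
    using assms by (intro distr_PiM_component prob_space_axioms) auto
  then show ?thesis
    using integral_distr[OF component borel_measurable_h] by simp
qed

lemma integral_ghost_sum:
  "(\<integral>y. (\<Sum>i<m. h j (x i) - h j (y (i + m))) \<partial>iid {m..<2 * m})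
     = (\<Sum>i<m. h j (x i) - (\<integral>w. h j w \<partial>P))"
proof -
  interpret ghost: prob_space "iid {m..<2 * m}"
    by (rule prob_space_iid)
  have integrable_ghost: "integrable (iid {m..<2 * m}) (\<lambda>y. h j (y (i + m)))" if "i < m" for i
    using that by (intro integrable_bounded_prob[OF prob_space_iid borel_measurable_h_component abs_h_le]) auto
  have "(\<integral>y. (\<Sum>i<m. h j (x i) - h j (y (i + m))) \<partial>iid {m..<2 * m})
      = (\<Sum>i<m. (\<integral>y. h j (x i) - h j (y (i + m)) \<partial>iid {m..<2 * m}))"
    using integrable_ghost by (intro Bochner_Integration.integral_sum) auto
  also have "\<dots> = (\<Sum>i<m. h j (x i) - (\<integral>w. h j w \<partial>P))"
    using integrable_ghost integral_ghost_coordinate by (intro sum.cong) (simp_all add: ghost.prob_space)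
  finally show ?thesis .
qed

lemma ghost_merge:
  "merge {..<m} {m..<2 * m} \<in> measurable (iid {..<m} \<Otimes>\<^sub>M iid {m..<2 * m}) (iid {..<2 * m})"
  "distr (iid {..<m} \<Otimes>\<^sub>M iid {m..<2 * m}) (iid {..<2 * m}) (merge {..<m} {m..<2 * m})
     = iid {..<2 * m}"
proof -
  interpret product_prob_space "\<lambda>_::nat. P"
    by (rule product_prob_spaceI) (rule prob_space_axioms)
  have union: "{..<m} \<union> {m..<2 * m} = {..<2 * m}"
    and disjoint: "{..<m} \<inter> {m..<2 * m} = {}"
    by auto
  show "merge {..<m} {m..<2 * m} \<in> measurable (iid {..<m} \<Otimes>\<^sub>M iid {m..<2 * m}) (iid {..<2 * m})"
    using measurable_merge[of "{..<m}" "{m..<2 * m}" "\<lambda>_. P"] by (simp only: union)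
  show "distr (iid {..<m} \<Otimes>\<^sub>M iid {m..<2 * m}) (iid {..<2 * m}) (merge {..<m} {m..<2 * m})
          = iid {..<2 * m}"
    using distr_merge[OF disjoint] by (simp only: union finite_lessThan finite_atLeastLessThan)
qed

lemma max_deviation_le_integral_ghost:
  assumes x: "x \<in> space (iid {..<m})"
  shows "max_deviation m x
           \<le> (\<integral>y. max_ghost_difference m {} (merge {..<m} {m..<2 * m} (x, y)) \<partial>iid {m..<2 * m})"
  unfolding max_deviation_def
proof (rule Max.boundedI)
  show "finite ((\<lambda>j. \<bar>\<Sum>i<m. h j (x i) - (\<integral>w. h j w \<partial>P)\<bar>) ` J)"
    and "(\<lambda>j. \<bar>\<Sum>i<m. h j (x i) - (\<integral>w. h j w \<partial>P)\<bar>) ` J \<noteq> {}"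
    using finite_J J_not_empty by auto
  fix a assume "a \<in> (\<lambda>j. \<bar>\<Sum>i<m. h j (x i) - (\<integral>w. h j w \<partial>P)\<bar>) ` J"
  then obtain j where j: "j \<in> J" "a = \<bar>\<Sum>i<m. h j (x i) - (\<integral>w. h j w \<partial>P)\<bar>"
    by auto
  let ?Y = "iid {m..<2 * m}"
  interpret ghost: prob_space ?Y
    by (rule prob_space_iid)
  have integrable_ghost: "integrable ?Y (\<lambda>y. h j (y (i + m)))" if "i < m" for i
    using that by (intro integrable_bounded_prob[OF prob_space_iid borel_measurable_h_component abs_h_le]) auto
  have "a = \<bar>\<integral>y. (\<Sum>i<m. h j (x i) - h j (y (i + m))) \<partial>?Y\<bar>"
    using j(2) by (simp add: integral_ghost_sum)
  also have "\<dots> \<le> (\<integral>y. \<bar>\<Sum>i<m. h j (x i) - h j (y (i + m))\<bar> \<partial>?Y)"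
    by (rule integral_abs_bound)
  also have "\<dots> \<le> (\<integral>y. max_ghost_difference m {} (merge {..<m} {m..<2 * m} (x, y)) \<partial>?Y)"
  proof (rule integral_mono)
    show "integrable ?Y (\<lambda>y. \<bar>\<Sum>i<m. h j (x i) - h j (y (i + m))\<bar>)"
      using integrable_ghost by (intro integrable_abs integrable_sum integrable_diff) auto
    have "(\<lambda>y. merge {..<m} {m..<2 * m} (x, y)) \<in> measurable ?Y (iid {..<2 * m})"
      using ghost_merge(1) x by measurable
    then show "integrable ?Y (\<lambda>y. max_ghost_difference m {} (merge {..<m} {m..<2 * m} (x, y)))"
      by (intro integrable_bounded_prob[OF prob_space_iid _ abs_max_ghost_difference_le]) simp
    fix y
    have "\<bar>\<Sum>i<m. h j (x i) - h j (y (i + m))\<bar>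
        = \<bar>\<Sum>i<m. sign_pattern {} i * (h j (merge {..<m} {m..<2 * m} (x, y) i)
                                        - h j (merge {..<m} {m..<2 * m} (x, y) (i + m)))\<bar>"
      by (intro arg_cong[where f = abs] sum.cong) (auto simp: merge_def sign_pattern_def)
    also have "\<dots> \<le> max_ghost_difference m {} (merge {..<m} {m..<2 * m} (x, y))"
      unfolding max_ghost_difference_def using finite_J j(1) by (intro Max_ge) auto
    finally show "\<bar>\<Sum>i<m. h j (x i) - h j (y (i + m))\<bar>
                    \<le> max_ghost_difference m {} (merge {..<m} {m..<2 * m} (x, y))" .
  qed
  finally show "a \<le> (\<integral>y. max_ghost_difference m {} (merge {..<m} {m..<2 * m} (x, y)) \<partial>?Y)" .
qed

lemma integral_max_deviation_le_ghost:
  "(\<integral>\<omega>. max_deviation m \<omega> \<partial>iid {..<m}) \<le> (\<integral>v. max_ghost_difference m {} v \<partial>iid {..<2 * m})"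
proof -
  interpret sample: prob_space "iid {..<m}"
    by (rule prob_space_iid)
  interpret ghost: prob_space "iid {m..<2 * m}"
    by (rule prob_space_iid)
  interpret pair_prob_space "iid {..<m}" "iid {m..<2 * m}" ..
  have integrable: "integrable (iid {..<m} \<Otimes>\<^sub>M iid {m..<2 * m})
                      (\<lambda>p. max_ghost_difference m {} (merge {..<m} {m..<2 * m} p))"
    using ghost_merge(1) by (intro integrable_bounded_prob[OF prob_space_axioms _ abs_max_ghost_difference_le])
      measurable
  have "(\<integral>v. max_ghost_difference m {} v \<partial>iid {..<2 * m})
      = (\<integral>p. max_ghost_difference m {} (merge {..<m} {m..<2 * m} p) \<partial>(iid {..<m} \<Otimes>\<^sub>M iid {m..<2 * m}))"
    using integral_distr[OF ghost_merge(1), of "max_ghost_difference m {}"] by (simp add: ghost_merge(2))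
  also have "\<dots> = (\<integral>x. (\<integral>y. max_ghost_difference m {} (merge {..<m} {m..<2 * m} (x, y))
                             \<partial>iid {m..<2 * m}) \<partial>iid {..<m})"
    by (rule integral_fst'[OF integrable, symmetric])
  finally show ?thesis
    using integrable_max_deviation integrable_fst'[OF integrable]
    by (simp add: integral_mono max_deviation_le_integral_ghost)
qed

lemma integral_max_ghost_difference_swap:
  assumes E: "E \<subseteq> {..<m}"
  shows "(\<integral>v. max_ghost_difference m E v \<partial>iid {..<2 * m})
           = (\<integral>v. max_ghost_difference m {} v \<partial>iid {..<2 * m})"
proof -
  have "max_ghost_difference m {} (\<lambda>n\<in>{..<2 * m}. v (swap_ghost m E n)) = max_ghost_difference m E v"
    for v
    unfolding max_ghost_difference_def
    by (intro arg_cong[where f = Max] image_cong refl arg_cong[where f = abs] sum.cong)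
      (use E in \<open>auto simp: swap_ghost_def sign_pattern_def subset_iff\<close>)
  then show ?thesis
    using integral_PiM_reindex[OF prob_space_axioms swap_ghost_permutes[OF E]
        borel_measurable_max_ghost_difference[of m "{}"]] by simp
qed

lemma average_max_ghost_difference_le:
  "(\<Sum>E\<in>Pow {..<m}. max_ghost_difference m E v) / 2 ^ m
     \<le> rademacher_average {..<m} J (\<lambda>j i. h j (v i))
       + rademacher_average {..<m} J (\<lambda>j i. h j (v (i + m)))"
proof -
  define R where "R E w = Max ((\<lambda>j. \<bar>\<Sum>i<m. sign_pattern E i * h j (w i)\<bar>) ` J)" for E w
  have "max_ghost_difference m E v \<le> R E v + R E (\<lambda>i. v (i + m))" for E
    unfolding max_ghost_difference_def
  proof (rule Max.boundedI)
    show "finite ((\<lambda>j. \<bar>\<Sum>i<m. sign_pattern E i * (h j (v i) - h j (v (i + m)))\<bar>) ` J)"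
      and "(\<lambda>j. \<bar>\<Sum>i<m. sign_pattern E i * (h j (v i) - h j (v (i + m)))\<bar>) ` J \<noteq> {}"
      using finite_J J_not_empty by auto
    fix a assume "a \<in> (\<lambda>j. \<bar>\<Sum>i<m. sign_pattern E i * (h j (v i) - h j (v (i + m)))\<bar>) ` J"
    then obtain j where j: "j \<in> J" "a = \<bar>\<Sum>i<m. sign_pattern E i * (h j (v i) - h j (v (i + m)))\<bar>"
      by auto
    then have "a = \<bar>(\<Sum>i<m. sign_pattern E i * h j (v i)) - (\<Sum>i<m. sign_pattern E i * h j (v (i + m)))\<bar>"
      by (simp add: algebra_simps sum_subtractf)
    also have "\<dots> \<le> \<bar>\<Sum>i<m. sign_pattern E i * h j (v i)\<bar> + \<bar>\<Sum>i<m. sign_pattern E i * h j (v (i + m))\<bar>"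
      by (rule abs_triangle_ineq4)
    also have "\<dots> \<le> R E v + R E (\<lambda>i. v (i + m))"
      unfolding R_def using finite_J j(1) by (intro add_mono Max_ge) auto
    finally show "a \<le> R E v + R E (\<lambda>i. v (i + m))" .
  qed
  then have "(\<Sum>E\<in>Pow {..<m}. max_ghost_difference m E v)
               \<le> (\<Sum>E\<in>Pow {..<m}. R E v) + (\<Sum>E\<in>Pow {..<m}. R E (\<lambda>i. v (i + m)))"
    by (simp add: sum_mono flip: sum.distrib)
  then show ?thesis
    unfolding rademacher_average_def R_def by (simp add: divide_right_mono flip: add_divide_distrib)
qed

lemma integral_rademacher_average_ghost:
  "(\<integral>v. rademacher_average {..<m} J (\<lambda>j i. h j (v i)) \<partial>iid {..<2 * m})
     = (\<integral>\<omega>. rademacher_average {..<m} J (\<lambda>j i. h j (\<omega> i)) \<partial>iid {..<m})"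
  "(\<integral>v. rademacher_average {..<m} J (\<lambda>j i. h j (v (i + m))) \<partial>iid {..<2 * m})
     = (\<integral>\<omega>. rademacher_average {..<m} J (\<lambda>j i. h j (\<omega> i)) \<partial>iid {..<m})"
proof -
  let ?R = "\<lambda>\<omega>. rademacher_average {..<m} J (\<lambda>j i. h j (\<omega> i))"
  have R_restrict: "?R (restrict v {..<m}) = ?R v" for v
    unfolding rademacher_average_def
    by (intro arg_cong2[where f = "(/)"] sum.cong refl arg_cong[where f = Max] image_cong
        arg_cong[where f = abs]) auto
  have "(\<integral>v. ?R (restrict v {..<m}) \<partial>iid {..<2 * m}) = (\<integral>\<omega>. ?R \<omega> \<partial>iid {..<m})"
    by (rule integral_PiM_restrict[OF prob_space_axioms]) (auto intro: borel_measurable_rademacher_average)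
  then have restrict: "(\<integral>v. ?R v \<partial>iid {..<2 * m}) = (\<integral>\<omega>. ?R \<omega> \<partial>iid {..<m})"
    by (simp only: R_restrict)
  then show "(\<integral>v. ?R v \<partial>iid {..<2 * m}) = (\<integral>\<omega>. ?R \<omega> \<partial>iid {..<m})" .
  have "?R (\<lambda>i. v (i + m)) = ?R (\<lambda>n\<in>{..<2 * m}. v (swap_ghost m {..<m} n))" for v
    unfolding rademacher_average_def
    by (intro arg_cong2[where f = "(/)"] sum.cong refl arg_cong[where f = Max] image_cong
        arg_cong[where f = abs]) (auto simp: swap_ghost_def)
  then show "(\<integral>v. ?R (\<lambda>i. v (i + m)) \<partial>iid {..<2 * m}) = (\<integral>\<omega>. ?R \<omega> \<partial>iid {..<m})"
    using integral_PiM_reindex[OF prob_space_axioms swap_ghost_permutes[of "{..<m}" m]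
        borel_measurable_rademacher_average[of m id]] restrict by simp
qed

theorem symmetrization:
  "(\<integral>\<omega>. max_deviation m \<omega> \<partial>iid {..<m})
     \<le> 2 * (\<integral>\<omega>. rademacher_average {..<m} J (\<lambda>j i. h j (\<omega> i)) \<partial>iid {..<m})"
proof -
  let ?V = "iid {..<2 * m}"
  have "(\<integral>\<omega>. max_deviation m \<omega> \<partial>iid {..<m}) \<le> (\<integral>v. max_ghost_difference m {} v \<partial>?V)"
    by (rule integral_max_deviation_le_ghost)
  also have "\<dots> = (\<Sum>E\<in>Pow {..<m}. \<integral>v. max_ghost_difference m {} v \<partial>?V) / 2 ^ m"
    by (simp add: card_Pow)
  also have "\<dots> = (\<Sum>E\<in>Pow {..<m}. \<integral>v. max_ghost_difference m E v \<partial>?V) / 2 ^ m"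
    by (intro arg_cong2[where f = "(/)"] sum.cong refl integral_max_ghost_difference_swap[symmetric]) auto
  also have "\<dots> = (\<integral>v. (\<Sum>E\<in>Pow {..<m}. max_ghost_difference m E v) / 2 ^ m \<partial>?V)"
    by (simp add: Bochner_Integration.integral_sum integrable_max_ghost_difference)
  also have "\<dots> \<le> (\<integral>v. rademacher_average {..<m} J (\<lambda>j i. h j (v i))
                         + rademacher_average {..<m} J (\<lambda>j i. h j (v (i + m))) \<partial>?V)"
  proof (rule integral_mono[OF _ _ average_max_ghost_difference_le])
    show "integrable ?V (\<lambda>v. (\<Sum>E\<in>Pow {..<m}. max_ghost_difference m E v) / 2 ^ m)"
      by (intro integrable_divide Bochner_Integration.integrable_sum integrable_max_ghost_difference)
    show "integrable ?V (\<lambda>v. rademacher_average {..<m} J (\<lambda>j i. h j (v i))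
                              + rademacher_average {..<m} J (\<lambda>j i. h j (v (i + m))))"
      by (intro Bochner_Integration.integrable_add integrable_rademacher_average) auto
  qed
  also have "\<dots> = 2 * (\<integral>\<omega>. rademacher_average {..<m} J (\<lambda>j i. h j (\<omega> i)) \<partial>iid {..<m})"
    using integrable_rademacher_average[of m id] integrable_rademacher_average[of m "\<lambda>i. i + m"]
    by (simp add: integral_rademacher_average_ghost)
  finally show ?thesis .
qed

lemma nn_integral_symmetrization:
  "(\<integral>\<^sup>+\<omega>. max_deviation m \<omega> \<partial>iid {..<m})
     \<le> 2 * (\<integral>\<^sup>+\<omega>. rademacher_average {..<m} J (\<lambda>j i. h j (\<omega> i)) \<partial>iid {..<m})"
proof -
  have "(\<integral>\<^sup>+\<omega>. max_deviation m \<omega> \<partial>iid {..<m}) = ennreal (\<integral>\<omega>. max_deviation m \<omega> \<partial>iid {..<m})"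
    by (intro nn_integral_eq_integral integrable_max_deviation) (simp add: max_deviation_nonneg)
  also have "\<dots> \<le> ennreal (2 * (\<integral>\<omega>. rademacher_average {..<m} J (\<lambda>j i. h j (\<omega> i)) \<partial>iid {..<m}))"
    by (intro ennreal_leI symmetrization)
  also have "\<dots> = ennreal 2 * ennreal (\<integral>\<omega>. rademacher_average {..<m} J (\<lambda>j i. h j (\<omega> i)) \<partial>iid {..<m})"
    by (intro ennreal_mult Bochner_Integration.integral_nonneg rademacher_average_nonneg[OF finite_J J_not_empty])
      auto
  also have "ennreal (\<integral>\<omega>. rademacher_average {..<m} J (\<lambda>j i. h j (\<omega> i)) \<partial>iid {..<m})
               = (\<integral>\<^sup>+\<omega>. rademacher_average {..<m} J (\<lambda>j i. h j (\<omega> i)) \<partial>iid {..<m})"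
    by (intro nn_integral_eq_integral[symmetric] integrable_rademacher_average AE_I2
        rademacher_average_nonneg[OF finite_J J_not_empty]) auto
  finally show ?thesis
    by simp
qed

lemma nn_integral_max_deviation_le:
  fixes M :: "(nat \<Rightarrow> 'a) \<Rightarrow> real"
  assumes m: "m > 0" and c: "0 \<le> c" and M: "M \<in> borel_measurable (iid {..<m})" "\<And>\<omega>. 0 \<le> M \<omega>"
    and rademacher: "\<And>\<omega>. rademacher_average {..<m} J (\<lambda>j i. h j (\<omega> i)) \<le> c * M \<omega>"
  shows "(\<integral>\<^sup>+\<omega>. ennreal (max_deviation m \<omega> / m) \<partial>iid {..<m})
           \<le> ennreal (2 * c / m) * (\<integral>\<^sup>+\<omega>. ennreal (M \<omega>) \<partial>iid {..<m})"
proof -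
  have "ennreal (max_deviation m \<omega> / m) = ennreal (1 / m) * ennreal (max_deviation m \<omega>)" for \<omega>
    using ennreal_mult[of "1 / m" "max_deviation m \<omega>"] max_deviation_nonneg by simp
  then have "(\<integral>\<^sup>+\<omega>. ennreal (max_deviation m \<omega> / m) \<partial>iid {..<m})
               = ennreal (1 / m) * (\<integral>\<^sup>+\<omega>. max_deviation m \<omega> \<partial>iid {..<m})"
    by (simp add: nn_integral_cmult)
  also have "\<dots> \<le> ennreal (1 / m) * (2 * (\<integral>\<^sup>+\<omega>. rademacher_average {..<m} J (\<lambda>j i. h j (\<omega> i)) \<partial>iid {..<m}))"
    by (intro mult_left_mono nn_integral_symmetrization) simp
  also have "\<dots> \<le> ennreal (1 / m) * (2 * (\<integral>\<^sup>+\<omega>. ennreal c * ennreal (M \<omega>) \<partial>iid {..<m}))"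
  proof (intro mult_left_mono nn_integral_mono)
    fix \<omega>
    have "ennreal (rademacher_average {..<m} J (\<lambda>j i. h j (\<omega> i))) \<le> ennreal (c * M \<omega>)"
      using rademacher by (rule ennreal_leI)
    then show "ennreal (rademacher_average {..<m} J (\<lambda>j i. h j (\<omega> i))) \<le> ennreal c * ennreal (M \<omega>)"
      using ennreal_mult[OF c M(2)] by simp
  qed simp_all
  also have "\<dots> = ennreal (1 / m) * ennreal 2 * ennreal c * (\<integral>\<^sup>+\<omega>. ennreal (M \<omega>) \<partial>iid {..<m})"
    using M(1) by (simp add: nn_integral_cmult mult.assoc)
  also have "ennreal (1 / m) * ennreal 2 * ennreal c = ennreal (2 * c / m)"
    using c by (simp add: ennreal_mult[symmetric] del: ennreal_numeral)
  finally show ?thesis .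
qed

end

section \<open>The empirical cosine process\<close>

definition empirical_cos_error :: "nat \<Rightarrow> ('a \<Rightarrow> real) \<Rightarrow> (nat \<Rightarrow> 'a::real_inner) \<Rightarrow> 'a \<Rightarrow> real" where
  "empirical_cos_error m k \<omega> t = (\<Sum>i<m. cos (\<omega> i \<bullet> t)) / m - k t"

definition max_norm :: "nat \<Rightarrow> (nat \<Rightarrow> 'a::real_normed_vector) \<Rightarrow> real" where
  "max_norm m \<omega> = Max ((\<lambda>i. norm (\<omega> i)) ` {..<m})"

definition cos_increment :: "'a::real_inner \<times> 'a \<Rightarrow> 'a \<Rightarrow> real" where
  "cos_increment uv w = cos (w \<bullet> fst uv) - cos (w \<bullet> snd uv)"

lemma norm_le_max_norm: "i < m \<Longrightarrow> norm (\<omega> i) \<le> max_norm m \<omega>"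
  unfolding max_norm_def by (intro Max_ge) auto

lemma max_norm_nonneg: "m > 0 \<Longrightarrow> 0 \<le> max_norm m \<omega>"
  using norm_le_max_norm[of 0 m \<omega>] norm_ge_zero[of "\<omega> 0"] by linarith

lemma borel_measurable_max_norm:
  fixes P :: "'a::euclidean_space measure"
  assumes "sets P = sets borel"
  shows "max_norm m \<in> borel_measurable (PiM {..<m} (\<lambda>_. P))"
proof -
  have [measurable]: "(norm :: 'a \<Rightarrow> real) \<in> borel_measurable P"
    by (subst measurable_cong_sets[OF assms refl]) measurable
  show ?thesis
    unfolding max_norm_def by measurable
qed

lemma abs_cos_inner_diff_le: "\<bar>cos (w \<bullet> u) - cos (w \<bullet> v)\<bar> \<le> norm w * norm (u - v)"
  for w u v :: "'a::real_inner"
proof -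
  have "\<bar>cos (w \<bullet> u) - cos (w \<bullet> v)\<bar>
      = 2 * \<bar>sin ((w \<bullet> u + w \<bullet> v) / 2)\<bar> * \<bar>sin ((w \<bullet> v - w \<bullet> u) / 2)\<bar>"
    by (simp add: cos_diff_cos abs_mult)
  also have "\<dots> \<le> 2 * 1 * \<bar>(w \<bullet> v - w \<bullet> u) / 2\<bar>"
    by (intro mult_mono abs_sin_x_le_abs_x) auto
  also have "\<dots> = \<bar>w \<bullet> (u - v)\<bar>"
    by (simp add: inner_diff_right)
  also have "\<dots> \<le> norm w * norm (u - v)"
    by (rule Cauchy_Schwarz_ineq2)
  finally show ?thesis .
qed

lemma empirical_cos_error_lipschitz:
  assumes m: "m > 0" and lip: "L-lipschitz_on T k" and ts: "t \<in> T" "s \<in> T"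
  shows "\<bar>empirical_cos_error m k \<omega> t - empirical_cos_error m k \<omega> s\<bar>
           \<le> (max_norm m \<omega> + L) * norm (t - s)"
proof -
  have "\<bar>(\<Sum>i<m. cos (\<omega> i \<bullet> t)) - (\<Sum>i<m. cos (\<omega> i \<bullet> s))\<bar>
      \<le> (\<Sum>i<m. \<bar>cos (\<omega> i \<bullet> t) - cos (\<omega> i \<bullet> s)\<bar>)"
    by (simp add: sum_abs flip: sum_subtractf)
  also have "\<dots> \<le> (\<Sum>i<m. max_norm m \<omega> * norm (t - s))"
    by (intro sum_mono order_trans[OF abs_cos_inner_diff_le] mult_right_mono norm_le_max_norm) auto
  finally have "\<bar>(\<Sum>i<m. cos (\<omega> i \<bullet> t)) / m - (\<Sum>i<m. cos (\<omega> i \<bullet> s)) / m\<bar>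
                  \<le> max_norm m \<omega> * norm (t - s)"
    using m by (simp add: field_simps flip: diff_divide_distrib)
  moreover have "\<bar>k t - k s\<bar> \<le> L * norm (t - s)"
    using lipschitz_onD[OF lip ts] by (simp add: dist_norm)
  ultimately show ?thesis
    unfolding empirical_cos_error_def by (simp add: algebra_simps abs_triangle_ineq4 order_trans[OF abs_triangle_ineq4])
qed

lemma empirical_cos_error_zero:
  assumes "prob_space P" "\<And>t. k t = (\<integral>w. cos (w \<bullet> t) \<partial>P)" "m > 0"
  shows "empirical_cos_error m k \<omega> 0 = 0"
  using assms by (simp add: empirical_cos_error_def prob_space.prob_space)

lemma borel_measurable_Max_abs_diff_empirical_cos_error:
  fixes P :: "'a::euclidean_space measure" and A :: "('a \<times> 'a) set"
  assumes sP: "sets P = sets borel" and A: "finite A"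
  shows "(\<lambda>\<omega>. Max ((\<lambda>(u, v). \<bar>empirical_cos_error m k \<omega> u - empirical_cos_error m k \<omega> v\<bar>) ` A))
           \<in> borel_measurable (PiM {..<m} (\<lambda>_. P))"
proof (rule borel_measurable_Max[OF A])
  have [measurable]: "(\<lambda>w. cos (w \<bullet> t)) \<in> borel_measurable P" for t :: 'a
    by (subst measurable_cong_sets[OF sP refl]) measurable
  fix q :: "'a \<times> 'a"
  show "(\<lambda>\<omega>. case q of (u, v) \<Rightarrow> \<bar>empirical_cos_error m k \<omega> u - empirical_cos_error m k \<omega> v\<bar>)
          \<in> borel_measurable (PiM {..<m} (\<lambda>_. P))"
    by (cases q) (simp add: empirical_cos_error_def)
qed

lemma bounded_family_cos_increment:
  fixes P :: "'a::euclidean_space measure"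
  assumes "prob_space P" "sets P = sets borel" "finite L" "L \<noteq> {}"
  shows "bounded_family P L cos_increment 2"
proof -
  have "cos_increment j \<in> borel_measurable P" for j
    unfolding cos_increment_def by (subst measurable_cong_sets[OF assms(2) refl]) measurable
  moreover have "\<bar>cos_increment j w\<bar> \<le> 2" for j w
    using cos_le_one cos_ge_minus_one unfolding cos_increment_def abs_le_iff by (smt (verit))
  ultimately show ?thesis
    using assms unfolding bounded_family_def bounded_family_axioms_def by blast
qed

lemma empirical_cos_error_diff_eq:
  fixes P :: "'a::euclidean_space measure"
  assumes P: "prob_space P" and sP: "sets P = sets borel"
    and k: "\<And>t. k t = (\<integral>w. cos (w \<bullet> t) \<partial>P)" and m: "m > 0"
  shows "empirical_cos_error m k \<omega> u - empirical_cos_error m k \<omega> v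
           = (\<Sum>i<m. cos_increment (u, v) (\<omega> i) - (\<integral>w. cos_increment (u, v) w \<partial>P)) / m"
proof -
  interpret prob_space P
    by (fact P)
  have mean: "(\<integral>w. cos_increment (u, v) w \<partial>P) = k u - k v"
    unfolding cos_increment_def k fst_conv snd_conv
    by (intro Bochner_Integration.integral_diff integrable_const_bound[where B = 1])
      (auto simp: measurable_cong_sets[OF sP refl])
  have "empirical_cos_error m k \<omega> u - empirical_cos_error m k \<omega> v
          = (\<Sum>i<m. cos_increment (u, v) (\<omega> i) - (k u - k v)) / m"
    using m by (simp add: empirical_cos_error_def cos_increment_def sum_subtractf sum.distrib field_simps)
  then show ?thesis
    by (simp only: mean)
qed

lemma rademacher_average_cos_increment_le:
  assumes m: "m > 0" and L: "finite L" "L \<noteq> {}" and r: "\<And>u v. (u, v) \<in> L \<Longrightarrow> norm (u - v) \<le> r"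
  shows "rademacher_average {..<m} L (\<lambda>j i. cos_increment j (\<omega> i))
           \<le> r * sqrt m * sqrt (2 * ln (2 * real (card L))) * max_norm m \<omega>"
proof -
  obtain u v where uv: "(u, v) \<in> L"
    using L by auto
  have r0: "0 \<le> r"
    using r[OF uv] norm_ge_zero[of "u - v"] by linarith
  have "(cos_increment j (\<omega> i))\<^sup>2 \<le> (r * max_norm m \<omega>)\<^sup>2" if "j \<in> L" "i < m" for j i
  proof -
    have "\<bar>cos_increment j (\<omega> i)\<bar> \<le> max_norm m \<omega> * r"
      using that r[of "fst j" "snd j"] max_norm_nonneg[OF m] norm_le_max_norm[OF that(2)]
      unfolding cos_increment_def
      by (intro order_trans[OF abs_cos_inner_diff_le] mult_mono) auto
    then show ?thesis
      using power_mono[of "\<bar>cos_increment j (\<omega> i)\<bar>" "max_norm m \<omega> * r" 2] by (simp add: mult.commute)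
  qed
  then have "(\<Sum>i<m. (cos_increment j (\<omega> i))\<^sup>2) \<le> real (card {..<m}) * (r * max_norm m \<omega>)\<^sup>2"
    if "j \<in> L" for j
    using that by (intro sum_bounded_above) auto
  then have "(\<Sum>i<m. (cos_increment j (\<omega> i))\<^sup>2) \<le> (r * sqrt m * max_norm m \<omega>)\<^sup>2" if "j \<in> L" for j
    using that by (simp add: power_mult_distrib mult_ac)
  then have "rademacher_average {..<m} L (\<lambda>j i. cos_increment j (\<omega> i))
               \<le> (r * sqrt m * max_norm m \<omega>) * sqrt (2 * ln (2 * real (card L)))"
    using r0 max_norm_nonneg[OF m, of \<omega>] by (intro massart_finite_class L) auto
  then show ?thesis
    by (simp add: mult_ac)
qed

lemma Max_abs_diff_empirical_cos_error_le:
  fixes P :: "'a::euclidean_space measure"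
  assumes P: "prob_space P" and sP: "sets P = sets borel"
    and k: "\<And>t. k t = (\<integral>w. cos (w \<bullet> t) \<partial>P)" and m: "m > 0" and L: "finite L" "L \<noteq> {}"
  shows "Max ((\<lambda>(u, v). \<bar>empirical_cos_error m k \<omega> u - empirical_cos_error m k \<omega> v\<bar>) ` L)
           \<le> Max ((\<lambda>j. \<bar>\<Sum>i<m. cos_increment j (\<omega> i) - (\<integral>w. cos_increment j w \<partial>P)\<bar>) ` L) / m"
proof (rule Max.boundedI)
  fix a assume "a \<in> (\<lambda>(u, v). \<bar>empirical_cos_error m k \<omega> u - empirical_cos_error m k \<omega> v\<bar>) ` L"
  then obtain u v where uv: "(u, v) \<in> L" "a = \<bar>empirical_cos_error m k \<omega> u - empirical_cos_error m k \<omega> v\<bar>"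
    by auto
  then have "a = \<bar>\<Sum>i<m. cos_increment (u, v) (\<omega> i) - (\<integral>w. cos_increment (u, v) w \<partial>P)\<bar> / m"
    by (simp add: empirical_cos_error_diff_eq[OF P sP k m])
  also have "\<dots> \<le> Max ((\<lambda>j. \<bar>\<Sum>i<m. cos_increment j (\<omega> i) - (\<integral>w. cos_increment j w \<partial>P)\<bar>) ` L) / m"
    using uv(1) L by (intro divide_right_mono Max_ge) auto
  finally show "a \<le> Max ((\<lambda>j. \<bar>\<Sum>i<m. cos_increment j (\<omega> i) - (\<integral>w. cos_increment j w \<partial>P)\<bar>) ` L) / m" .
qed (use L in auto)

lemma expected_max_cos_increment_le:
  fixes P :: "'a::euclidean_space measure" and L :: "('a \<times> 'a) set"
  assumes P: "prob_space P" and sP: "sets P = sets borel"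
    and k: "\<And>t. k t = (\<integral>w. cos (w \<bullet> t) \<partial>P)"
    and m: "m > 0" and L: "finite L" "L \<noteq> {}"
    and r: "\<And>u v. (u, v) \<in> L \<Longrightarrow> norm (u - v) \<le> r"
  shows "(\<integral>\<^sup>+\<omega>. ennreal (Max ((\<lambda>(u, v). \<bar>empirical_cos_error m k \<omega> u - empirical_cos_error m k \<omega> v\<bar>) ` L))
            \<partial>PiM {..<m} (\<lambda>_. P))
         \<le> ennreal (2 * r * sqrt (2 * ln (2 * real (card L))) / sqrt m)
           * (\<integral>\<^sup>+\<omega>. ennreal (max_norm m \<omega>) \<partial>PiM {..<m} (\<lambda>_. P))"
proof -
  interpret bounded_family P L cos_increment 2
    by (rule bounded_family_cos_increment[OF P sP L])
  obtain u v where uv: "(u, v) \<in> L"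
    using L by auto
  have "0 \<le> r"
    using r[OF uv] norm_ge_zero[of "u - v"] by linarith
  moreover have "1 \<le> card L"
    using L by (simp add: Suc_le_eq card_gt_0_iff)
  ultimately have c: "0 \<le> r * sqrt m * sqrt (2 * ln (2 * real (card L)))"
    by simp
  have "(\<integral>\<^sup>+\<omega>. ennreal (Max ((\<lambda>(u, v). \<bar>empirical_cos_error m k \<omega> u - empirical_cos_error m k \<omega> v\<bar>) ` L))
            \<partial>iid {..<m})
      \<le> (\<integral>\<^sup>+\<omega>. ennreal (max_deviation m \<omega> / m) \<partial>iid {..<m})"
    unfolding max_deviation_def
    by (intro nn_integral_mono ennreal_leI Max_abs_diff_empirical_cos_error_le[OF P sP k m L])
  also have "\<dots> \<le> ennreal (2 * (r * sqrt m * sqrt (2 * ln (2 * real (card L)))) / m)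
                   * (\<integral>\<^sup>+\<omega>. ennreal (max_norm m \<omega>) \<partial>iid {..<m})"
    by (rule nn_integral_max_deviation_le[OF m c borel_measurable_max_norm[OF sP] max_norm_nonneg[OF m]
          rademacher_average_cos_increment_le[OF m L r]])
  also have "2 * (r * sqrt m * sqrt (2 * ln (2 * real (card L)))) / m
               = 2 * r * sqrt (2 * ln (2 * real (card L))) / sqrt m"
  proof -
    have "sqrt m * sqrt m = m"
      by simp
    then show ?thesis
      using m by (simp add: field_simps)
  qed
  finally show ?thesis .
qed

section \<open>Chaining\<close>

lemma exists_dyadic_nets:
  fixes T :: "'a::euclidean_space set"
  assumes T: "T \<subseteq> cball 0 l" "0 \<in> T" and l: "l > 0"
  obtains Net :: "nat \<Rightarrow> 'a set" and p :: "nat \<Rightarrow> 'a \<Rightarrow> 'a" where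
    "\<And>j. finite (Net j)" "\<And>j. Net j \<subseteq> T" "Net 0 = {0}"
    "\<And>j. j \<ge> 1 \<Longrightarrow> real (card (Net j)) \<le> (1 + 2 ^ (j + 1)) ^ DIM('a)"
    "\<And>j t. t \<in> T \<Longrightarrow> p j t \<in> Net j \<and> dist t (p j t) \<le> l / 2 ^ j"
proof -
  have "\<exists>N. finite N \<and> N \<subseteq> T \<and> real (card N) \<le> (1 + 2 ^ (j + 1)) ^ DIM('a)
             \<and> (\<forall>t\<in>T. \<exists>u\<in>N. dist t u < l / 2 ^ j)" for j
  proof -
    have "2 * l / (l / 2 ^ j) = 2 ^ (j + 1)"
      using l by simp
    then show ?thesis
      using finite_net_exists[OF T(1) _ _ less_imp_le[OF l], of "l / 2 ^ j"] T(2) l by auto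
  qed
  then obtain N where N: "\<And>j. finite (N j)" "\<And>j. N j \<subseteq> T"
    "\<And>j. real (card (N j)) \<le> (1 + 2 ^ (j + 1)) ^ DIM('a)"
    "\<And>j t. t \<in> T \<Longrightarrow> \<exists>u\<in>N j. dist t u < l / 2 ^ j"
    by metis
  define Net where "Net j = (if j = 0 then {0} else N j)" for j
  define p where "p j t = (if j = 0 then 0 else SOME u. u \<in> N j \<and> dist t u < l / 2 ^ j)" for j t
  have "p j t \<in> Net j \<and> dist t (p j t) \<le> l / 2 ^ j" if "t \<in> T" for j t
  proof (cases "j = 0")
    case True
    then show ?thesis
      using T(1) that by (auto simp: p_def Net_def dist_norm)
  next
    case False
    have "\<exists>u. u \<in> N j \<and> dist t u < l / 2 ^ j"
      using N(4)[OF that] by blast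
    from someI_ex[OF this] show ?thesis
      using False by (auto simp: p_def Net_def)
  qed
  then show thesis
    using N T(2) by (intro that[of Net p]) (auto simp: Net_def)
qed

definition chain_links :: "(nat \<Rightarrow> 'a set) \<Rightarrow> (nat \<Rightarrow> 'a \<Rightarrow> 'a) \<Rightarrow> nat \<Rightarrow> ('a \<times> 'a) set" where
  "chain_links Net p j = (\<lambda>u. (u, p (j - 1) u)) ` Net j"

lemma abs_le_chaining_sum:
  fixes S :: "'a::metric_space \<Rightarrow> real"
  assumes Net: "\<And>j. finite (Net j)" "\<And>j. Net j \<subseteq> T" "Net 0 = {t0}" and S: "S t0 = 0"
    and p: "\<And>j t. t \<in> T \<Longrightarrow> p j t \<in> Net j \<and> dist t (p j t) \<le> \<epsilon> j"
    and lip: "\<And>t s. t \<in> T \<Longrightarrow> s \<in> T \<Longrightarrow> \<bar>S t - S s\<bar> \<le> C * dist t s" and C: "C \<ge> 0"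
    and t: "t \<in> T"
  shows "\<bar>S t\<bar> \<le> (\<Sum>j\<in>{1..n}. Max ((\<lambda>(u, v). \<bar>S u - S v\<bar>) ` chain_links Net p j)) + C * \<epsilon> n"
proof -
  let ?H = "\<lambda>j. Max ((\<lambda>(u, v). \<bar>S u - S v\<bar>) ` chain_links Net p j)"
  have chain: "\<bar>S u\<bar> \<le> (\<Sum>j\<in>{1..n}. ?H j)" if "u \<in> Net n" for u n
    using that
  proof (induction n arbitrary: u)
    case 0
    then show ?case
      using Net(3) S by simp
  next
    case (Suc n)
    have uT: "u \<in> T"
      using Suc.prems Net(2) by blast
    have "(u, p n u) \<in> chain_links Net p (Suc n)"
      using Suc.prems by (auto simp: chain_links_def)
    then have "\<bar>S u - S (p n u)\<bar> \<in> (\<lambda>(u, v). \<bar>S u - S v\<bar>) ` chain_links Net p (Suc n)"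
      by (rule rev_image_eqI) simp
    then have "\<bar>S u - S (p n u)\<bar> \<le> ?H (Suc n)"
      using Net(1) by (intro Max_ge) (auto simp: chain_links_def)
    moreover have "\<bar>S (p n u)\<bar> \<le> (\<Sum>j\<in>{1..n}. ?H j)"
      using Suc.IH p[OF uT] by blast
    ultimately show ?case
      by simp
  qed
  have "\<bar>S t - S (p n t)\<bar> \<le> C * \<epsilon> n"
    using lip[OF t, of "p n t"] p[OF t] Net(2) C by (meson mult_left_mono order_trans subsetD)
  moreover have "\<bar>S (p n t)\<bar> \<le> (\<Sum>j\<in>{1..n}. ?H j)"
    using chain p[OF t] by blast
  ultimately show ?thesis
    by linarith
qed

lemma sqrt_ln_card_dyadic_net_le:
  fixes N :: real
  assumes N: "1 \<le> N" "N \<le> (1 + 2 ^ (j + 1)) ^ d" and d: "d \<ge> 1"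
  shows "sqrt (2 * ln (2 * N)) \<le> sqrt 2 * sqrt d * ((real j + 7) / 4)"
proof -
  have "(1::real) \<le> 2 ^ (j + 1)"
    by (rule one_le_power) simp
  then have "(1 + 2 ^ (j + 1)) ^ d \<le> ((2::real) ^ (j + 2)) ^ d"
    by (intro power_mono) auto
  then have "2 * N \<le> 2 ^ (1 + (j + 2) * d)"
    using N(2) by (simp only: power_add power_mult power_one_right)
  also have "\<dots> \<le> 2 ^ ((j + 3) * d)"
    using d by (intro power_increasing) (auto simp: algebra_simps)
  finally have "ln (2 * N) \<le> ln (2 ^ ((j + 3) * d))"
    using N(1) by (subst ln_le_cancel_iff) auto
  also have "\<dots> = real ((j + 3) * d) * ln 2"
    by (simp add: ln_realpow)
  also have "\<dots> \<le> real ((j + 3) * d)"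
    using ln_2_less_1 by (intro mult_left_le) auto
  finally have "sqrt (2 * ln (2 * N)) \<le> sqrt (2 * ((real j + 3) * real d))"
    by simp
  also have "\<dots> = sqrt 2 * sqrt d * sqrt (real j + 3)"
    by (simp only: real_sqrt_mult[symmetric] mult_ac)
  also have "\<dots> \<le> sqrt 2 * sqrt d * ((real j + 7) / 4)"
  proof (intro mult_left_mono)
    have "real j + 3 \<le> ((real j + 7) / 4)\<^sup>2"
      using zero_le_power2[of "(real j - 1) / 4"] by (simp add: power2_eq_square field_simps)
    then show "sqrt (real j + 3) \<le> (real j + 7) / 4"
      by (subst real_sqrt_le_iff') auto
  qed simp
  finally show ?thesis .
qed

lemma expected_max_chain_link_le:
  fixes P :: "'a::euclidean_space measure"
  assumes P: "prob_space P" and sP: "sets P = sets borel"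
    and k: "\<And>t. k t = (\<integral>w. cos (w \<bullet> t) \<partial>P)" and m: "m > 0" and l: "l \<ge> 0"
    and Net: "finite (Net j)" "Net j \<noteq> {}" "j \<ge> 1"
      "real (card (Net j)) \<le> (1 + 2 ^ (j + 1)) ^ DIM('a)"
    and p: "\<And>u. u \<in> Net j \<Longrightarrow> dist u (p (j - 1) u) \<le> 2 * l / 2 ^ j"
  shows "(\<integral>\<^sup>+\<omega>. ennreal (Max ((\<lambda>(u, v). \<bar>empirical_cos_error m k \<omega> u - empirical_cos_error m k \<omega> v\<bar>)
                           ` chain_links Net p j)) \<partial>PiM {..<m} (\<lambda>_. P))
         \<le> ennreal (sqrt 2 * sqrt DIM('a) * l * ((real j + 7) / 2 ^ j) / sqrt m)
           * (\<integral>\<^sup>+\<omega>. ennreal (max_norm m \<omega>) \<partial>PiM {..<m} (\<lambda>_. P))"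
proof -
  let ?N = "real (card (chain_links Net p j))"
  have links: "finite (chain_links Net p j)" "chain_links Net p j \<noteq> {}"
    using Net by (auto simp: chain_links_def)
  have "card (chain_links Net p j) \<le> card (Net j)"
    unfolding chain_links_def using Net(1) by (rule card_image_le)
  then have "?N \<le> (1 + 2 ^ (j + 1)) ^ DIM('a)"
    using Net(4) by linarith
  moreover have "1 \<le> ?N"
    using links by (simp add: Suc_le_eq card_gt_0_iff)
  ultimately have "sqrt (2 * ln (2 * ?N)) \<le> sqrt 2 * sqrt DIM('a) * ((real j + 7) / 4)"
    by (intro sqrt_ln_card_dyadic_net_le) (auto simp: DIM_positive Suc_le_eq)
  then have "2 * (2 * l / 2 ^ j) * sqrt (2 * ln (2 * ?N)) / sqrt m
               \<le> 2 * (2 * l / 2 ^ j) * (sqrt 2 * sqrt DIM('a) * ((real j + 7) / 4)) / sqrt m"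
    using l by (intro divide_right_mono mult_left_mono) auto
  also have "\<dots> = sqrt 2 * sqrt DIM('a) * l * ((real j + 7) / 2 ^ j) / sqrt m"
    by (simp add: divide_simps algebra_simps)
  finally have link_constant: "ennreal (2 * (2 * l / 2 ^ j) * sqrt (2 * ln (2 * ?N)) / sqrt m)
                  \<le> ennreal (sqrt 2 * sqrt DIM('a) * l * ((real j + 7) / 2 ^ j) / sqrt m)"
    by (rule ennreal_leI)
  have "norm (u - v) \<le> 2 * l / 2 ^ j" if "(u, v) \<in> chain_links Net p j" for u v
    using that p by (auto simp: chain_links_def dist_norm)
  then have "(\<integral>\<^sup>+\<omega>. ennreal (Max ((\<lambda>(u, v). \<bar>empirical_cos_error m k \<omega> u - empirical_cos_error m k \<omega> v\<bar>)
                           ` chain_links Net p j)) \<partial>PiM {..<m} (\<lambda>_. P))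
      \<le> ennreal (2 * (2 * l / 2 ^ j) * sqrt (2 * ln (2 * ?N)) / sqrt m)
        * (\<integral>\<^sup>+\<omega>. ennreal (max_norm m \<omega>) \<partial>PiM {..<m} (\<lambda>_. P))"
    by (rule expected_max_cos_increment_le[OF P sP k m links])
  also have "\<dots> \<le> ennreal (sqrt 2 * sqrt DIM('a) * l * ((real j + 7) / 2 ^ j) / sqrt m)
                     * (\<integral>\<^sup>+\<omega>. ennreal (max_norm m \<omega>) \<partial>PiM {..<m} (\<lambda>_. P))"
    using link_constant by (rule mult_right_mono) simp
  finally show ?thesis .
qed

lemma sum_dyadic_weights_le: "(\<Sum>j\<in>{1..K}. (real j + 7) / 2 ^ j) \<le> 9"
proof -
  have "(\<Sum>j\<in>{1..K}. (real j + 7) / 2 ^ j) = 9 - (real K + 9) / 2 ^ K"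
    by (induction K) (simp_all add: field_simps)
  then show ?thesis
    by simp
qed

lemma chaining_constant_le:
  fixes d :: nat
  assumes m: "m > 0" and l: "l \<ge> 0" and d: "d \<ge> 1"
  shows "(\<Sum>j\<in>{1..m}. sqrt 2 * sqrt d * l * ((real j + 7) / 2 ^ j) / sqrt m) + l / 2 ^ m
           \<le> (9 * sqrt 2 + 1) * sqrt d * l / sqrt m"
proof -
  have "(\<Sum>j\<in>{1..m}. sqrt 2 * sqrt d * l * ((real j + 7) / 2 ^ j) / sqrt m)
      = sqrt 2 * sqrt d * l / sqrt m * (\<Sum>j\<in>{1..m}. (real j + 7) / 2 ^ j)"
    unfolding sum_distrib_left by (intro sum.cong refl) (simp add: field_simps)
  also have "\<dots> \<le> sqrt 2 * sqrt d * l / sqrt m * 9"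
    using l by (intro mult_left_mono sum_dyadic_weights_le) auto
  also have "\<dots> = 9 * sqrt 2 * sqrt d * l / sqrt m"
    by simp
  finally have sum: "(\<Sum>j\<in>{1..m}. sqrt 2 * sqrt d * l * ((real j + 7) / 2 ^ j) / sqrt m)
                       \<le> 9 * sqrt 2 * sqrt d * l / sqrt m" .
  have "real m < 2 ^ m"
    by (metis of_nat_less_numeral_power_cancel_iff less_exp)
  moreover have "(1::real) \<le> 2 ^ m"
    by (rule one_le_power) simp
  then have "(2::real) ^ m * 1 \<le> 2 ^ m * 2 ^ m"
    by (intro mult_left_mono) auto
  ultimately have "real m \<le> (2 ^ m)\<^sup>2"
    unfolding power2_eq_square by linarith
  then have "sqrt m \<le> 2 ^ m"
    by (simp add: real_sqrt_le_iff')
  then have "l / 2 ^ m \<le> l / sqrt m"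
    using m l by (intro divide_left_mono) auto
  also have "\<dots> \<le> sqrt d * l / sqrt m"
    using d l by (simp add: divide_right_mono mult_le_cancel_right1)
  finally show ?thesis
    using sum by (simp add: algebra_simps add_divide_distrib)
qed

lemma SUP_abs_empirical_cos_error_le:
  fixes P :: "'a::euclidean_space measure" and \<omega> :: "nat \<Rightarrow> 'a"
  assumes P: "prob_space P" and k: "\<And>t. k t = (\<integral>w. cos (w \<bullet> t) \<partial>P)" and m: "m > 0"
    and lip: "L-lipschitz_on T k" and T: "0 \<in> T" and l: "l \<ge> 0"
    and Net: "\<And>j. finite (Net j)" "\<And>j. Net j \<subseteq> T" "Net 0 = {0}"
    and p: "\<And>j t. t \<in> T \<Longrightarrow> p j t \<in> Net j \<and> dist t (p j t) \<le> l / 2 ^ j"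
  defines "H j \<equiv> Max ((\<lambda>(u, v). \<bar>empirical_cos_error m k \<omega> u - empirical_cos_error m k \<omega> v\<bar>)
                        ` chain_links Net p j)"
  shows "(SUP t\<in>T. ennreal \<bar>empirical_cos_error m k \<omega> t\<bar>)
           \<le> (\<Sum>j\<in>{1..m}. ennreal (H j)) + ennreal (l / 2 ^ m) * ennreal (max_norm m \<omega>)
             + ennreal (L * (l / 2 ^ m))"
proof (rule SUP_least)
  fix t assume "t \<in> T"
  let ?S = "empirical_cos_error m k \<omega>"
  have L: "0 \<le> L"
    using lip by (rule lipschitz_on_nonneg)
  have \<epsilon>: "0 \<le> l / 2 ^ m"
    using l by simp
  have "Net j \<noteq> {}" for j
    using p[OF T] by blast
  then have H: "0 \<le> H j" for j
    using Net(1) unfolding H_def by (auto simp: chain_links_def Max_ge_iff)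
  have "\<bar>?S t\<bar> \<le> (\<Sum>j\<in>{1..m}. H j) + (max_norm m \<omega> + L) * (l / 2 ^ m)"
    unfolding H_def
    by (rule abs_le_chaining_sum[where S = ?S and \<epsilon> = "\<lambda>j. l / 2 ^ j",
          OF Net empirical_cos_error_zero[OF P k m] p _ _ \<open>t \<in> T\<close>])
      (use empirical_cos_error_lipschitz[OF m lip] max_norm_nonneg[OF m, of \<omega>] L in \<open>auto simp: dist_norm\<close>)
  then have "ennreal \<bar>?S t\<bar> \<le> ennreal ((\<Sum>j\<in>{1..m}. H j) + l / 2 ^ m * max_norm m \<omega> + L * (l / 2 ^ m))"
    by (intro ennreal_leI) (simp add: algebra_simps add_divide_distrib)
  also have "\<dots> = ennreal (\<Sum>j\<in>{1..m}. H j) + ennreal (l / 2 ^ m) * ennreal (max_norm m \<omega>)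
                   + ennreal (L * (l / 2 ^ m))"
    using H max_norm_nonneg[OF m, of \<omega>] L \<epsilon> ennreal_plus ennreal_mult
    by (metis (no_types, lifting) add_nonneg_nonneg mult_nonneg_nonneg sum_nonneg)
  also have "ennreal (\<Sum>j\<in>{1..m}. H j) = (\<Sum>j\<in>{1..m}. ennreal (H j))"
    using H by (simp add: sum_ennreal)
  finally show "ennreal \<bar>?S t\<bar> \<le> (\<Sum>j\<in>{1..m}. ennreal (H j))
                  + ennreal (l / 2 ^ m) * ennreal (max_norm m \<omega>) + ennreal (L * (l / 2 ^ m))" .
qed

lemma ennreal_mult_add_le:
  fixes a e L C :: real
  assumes "a \<le> C" "e \<le> C" "0 \<le> e" "0 \<le> L"
  shows "ennreal a * X + ennreal (L * e) \<le> ennreal C * (X + ennreal L)"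
proof -
  have "ennreal a * X \<le> ennreal C * X"
    using assms(1) by (intro mult_right_mono ennreal_leI) auto
  moreover have "ennreal (L * e) \<le> ennreal (C * L)"
    using assms(2,4) by (intro ennreal_leI) (simp add: mult.commute[of C] mult_left_mono)
  then have "ennreal (L * e) \<le> ennreal C * ennreal L"
    using assms(2-4) by (simp add: ennreal_mult)
  ultimately show ?thesis
    by (simp add: distrib_left add_mono)
qed

lemma expected_sup_empirical_cos_error_le:
  fixes P :: "'a::euclidean_space measure"
  assumes P: "prob_space P" and sP: "sets P = sets borel"
    and k: "\<And>t. k t = (\<integral>w. cos (w \<bullet> t) \<partial>P)" and m: "m > 0"
    and T: "T \<subseteq> cball 0 l" "0 \<in> T" and lip: "L-lipschitz_on T k"
  shows "(\<integral>\<^sup>+\<omega>. (SUP t\<in>T. ennreal \<bar>empirical_cos_error m k \<omega> t\<bar>) \<partial>PiM {..<m} (\<lambda>_. P))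
           \<le> ennreal ((9 * sqrt 2 + 1) * sqrt DIM('a) * l / sqrt m)
             * ((\<integral>\<^sup>+\<omega>. ennreal (max_norm m \<omega>) \<partial>PiM {..<m} (\<lambda>_. P)) + ennreal L)"
proof (cases "l = 0")
  case True
  then have "T = {0}"
    using T by auto
  then show ?thesis
    using empirical_cos_error_zero[OF P k m] by simp
next
  case False
  then have l: "l > 0"
    using T by auto
  let ?Q = "PiM {..<m} (\<lambda>_. P)"
  interpret Q: prob_space ?Q
    by (intro prob_space_PiM P)
  define X where "X = (\<integral>\<^sup>+\<omega>. ennreal (max_norm m \<omega>) \<partial>?Q)"
  define \<epsilon> where "\<epsilon> = l / 2 ^ m"
  define c where "c j = sqrt 2 * sqrt DIM('a) * l * ((real j + 7) / 2 ^ j) / sqrt m" for j :: nat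
  obtain Net p where Net: "\<And>j. finite (Net j)" "\<And>j. Net j \<subseteq> T" "Net 0 = {0}"
      "\<And>j. j \<ge> 1 \<Longrightarrow> real (card (Net j)) \<le> (1 + 2 ^ (j + 1)) ^ DIM('a)"
    and p: "\<And>j t. t \<in> T \<Longrightarrow> p j t \<in> Net j \<and> dist t (p j t) \<le> l / 2 ^ j"
    using exists_dyadic_nets[OF T l] by blast
  define H where "H j \<omega> = Max ((\<lambda>(u, v). \<bar>empirical_cos_error m k \<omega> u - empirical_cos_error m k \<omega> v\<bar>)
                                  ` chain_links Net p j)" for j \<omega>
  have [measurable]: "H j \<in> borel_measurable ?Q" for j
    using Net(1) unfolding H_def chain_links_def
    by (intro borel_measurable_Max_abs_diff_empirical_cos_error sP finite_imageI)
  have [measurable]: "max_norm m \<in> borel_measurable ?Q"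
    by (rule borel_measurable_max_norm[OF sP])
  have level: "(\<integral>\<^sup>+\<omega>. ennreal (H j \<omega>) \<partial>?Q) \<le> ennreal (c j) * X" if "j \<in> {1..m}" for j
    unfolding H_def c_def X_def
  proof (rule expected_max_chain_link_le[OF P sP k m _ Net(1) _ _ Net(4)])
    show "dist u (p (j - 1) u) \<le> 2 * l / 2 ^ j" if "u \<in> Net j" for u
      using p[of u "j - 1"] that Net(2) \<open>j \<in> {1..m}\<close> by (cases j) auto
  qed (use l that p[OF T(2)] in auto)
  have "(\<integral>\<^sup>+\<omega>. (SUP t\<in>T. ennreal \<bar>empirical_cos_error m k \<omega> t\<bar>) \<partial>?Q)
      \<le> (\<integral>\<^sup>+\<omega>. (\<Sum>j\<in>{1..m}. ennreal (H j \<omega>)) + ennreal \<epsilon> * ennreal (max_norm m \<omega>) + ennreal (L * \<epsilon>) \<partial>?Q)"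
    unfolding H_def \<epsilon>_def
    by (intro nn_integral_mono SUP_abs_empirical_cos_error_le[OF P k m lip T(2) less_imp_le[OF l] Net(1-3) p])
  also have "\<dots> = (\<Sum>j\<in>{1..m}. \<integral>\<^sup>+\<omega>. ennreal (H j \<omega>) \<partial>?Q) + ennreal \<epsilon> * X + ennreal (L * \<epsilon>)"
    by (simp add: X_def nn_integral_add nn_integral_sum nn_integral_cmult Q.emeasure_space_1)
  also have "\<dots> \<le> (\<Sum>j\<in>{1..m}. ennreal (c j) * X) + ennreal \<epsilon> * X + ennreal (L * \<epsilon>)"
    by (intro add_mono sum_mono level order_refl)
  also have "\<dots> = ennreal ((\<Sum>j\<in>{1..m}. c j) + \<epsilon>) * X + ennreal (L * \<epsilon>)"
    using l by (simp add: c_def \<epsilon>_def ennreal_plus sum_nonneg sum_ennreal distrib_right flip: sum_distrib_right)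
  also have "\<dots> \<le> ennreal ((9 * sqrt 2 + 1) * sqrt DIM('a) * l / sqrt m) * (X + ennreal L)"
  proof (rule ennreal_mult_add_le)
    show sum_le: "(\<Sum>j\<in>{1..m}. c j) + \<epsilon> \<le> (9 * sqrt 2 + 1) * sqrt DIM('a) * l / sqrt m"
      unfolding c_def \<epsilon>_def using m l by (intro chaining_constant_le) (auto simp: DIM_positive Suc_le_eq)
    have "0 \<le> (\<Sum>j\<in>{1..m}. c j)"
      using l by (auto simp: c_def intro!: sum_nonneg)
    then show "\<epsilon> \<le> (9 * sqrt 2 + 1) * sqrt DIM('a) * l / sqrt m"
      using sum_le by linarith
  qed (use l lipschitz_on_nonneg[OF lip] in \<open>auto simp: \<epsilon>_def\<close>)
  finally show ?thesis
    unfolding X_def .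
qed

section \<open>Random Fourier features\<close>

lemma erfc_nonneg: "0 \<le> erfc x"
proof -
  have "0 \<le> integral {x..} (\<lambda>t. exp (- (t\<^sup>2)))"
    by (cases "(\<lambda>t. exp (- (t\<^sup>2))) integrable_on {x..}") (simp_all add: integral_nonneg not_integrable_integral)
  then show ?thesis
    unfolding erfc_def by simp
qed

lemma rff_gamma_ge: "18 + sqrt 2 \<le> 24 * rff_gamma"
proof -
  have "(13 / 16)\<^sup>2 \<le> (2 / 3 :: real)"
    by (simp add: power2_eq_square)
  also have "\<dots> \<le> ln 2"
    by (rule ln2_ge_two_thirds)
  finally have "13 / 16 \<le> sqrt (ln 2)"
    by (subst real_le_rsqrt) auto
  moreover have "sqrt 2 \<le> 142 / 100"
    by (subst real_sqrt_le_iff') (auto simp: power2_eq_square)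
  moreover have "sqrt (ln 2) \<le> rff_gamma"
    using erfc_nonneg[of "2 * sqrt (ln 2)"] unfolding rff_gamma_def by simp
  ultimately show ?thesis
    by linarith
qed

lemma chaining_constant_le_rff_constant:
  fixes d m :: nat
  assumes "l \<ge> 0"
  shows "(9 * sqrt 2 + 1) * sqrt d * l / sqrt m \<le> 24 * rff_gamma * sqrt d * l / sqrt (2 * m)"
proof -
  have "(9 * sqrt 2 + 1) * sqrt 2 = 18 + sqrt 2"
    by (simp add: algebra_simps)
  then have "(9 * sqrt 2 + 1) * sqrt 2 \<le> 24 * rff_gamma"
    using rff_gamma_ge by simp
  then have "(9 * sqrt 2 + 1) \<le> 24 * rff_gamma / sqrt 2"
    by (simp add: le_divide_eq)
  then have "(9 * sqrt 2 + 1) * (sqrt d * l / sqrt m) \<le> 24 * rff_gamma / sqrt 2 * (sqrt d * l / sqrt m)"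
    using assms by (intro mult_right_mono) auto
  also have "\<dots> = 24 * rff_gamma * sqrt d * l / sqrt (2 * m)"
  proof -
    have "sqrt (real (2 * m)) = sqrt 2 * sqrt m"
      by (simp add: real_sqrt_mult)
    then show ?thesis
      by simp
  qed
  finally show ?thesis
    by simp
qed

lemma sum_lessThan_double: "(\<Sum>j<2 * m. f j) = (\<Sum>i<m. f (2 * i) + f (2 * i + 1))"
  for f :: "nat \<Rightarrow> 'a::comm_monoid_add"
  by (induction m) (simp_all add: algebra_simps)

lemma rff_error_eq_empirical_cos_error:
  "rff_error (2 * m) k \<omega> x y = empirical_cos_error m k \<omega> (x - y)"
proof -
  define c where "c = sqrt (2 / real (2 * m))"
  have feature: "rff_feature (2 * m) \<omega> z (2 * i) = c * sin (\<omega> i \<bullet> z)"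
    "rff_feature (2 * m) \<omega> z (2 * i + 1) = c * cos (\<omega> i \<bullet> z)" for z i
    unfolding rff_feature_def c_def by simp_all
  have "rff_feature (2 * m) \<omega> x (2 * i) * rff_feature (2 * m) \<omega> y (2 * i)
          + rff_feature (2 * m) \<omega> x (2 * i + 1) * rff_feature (2 * m) \<omega> y (2 * i + 1)
        = cos (\<omega> i \<bullet> (x - y)) / m" for i
  proof -
    have "rff_feature (2 * m) \<omega> x (2 * i) * rff_feature (2 * m) \<omega> y (2 * i)
            + rff_feature (2 * m) \<omega> x (2 * i + 1) * rff_feature (2 * m) \<omega> y (2 * i + 1)
          = (c * c) * (cos (\<omega> i \<bullet> x) * cos (\<omega> i \<bullet> y) + sin (\<omega> i \<bullet> x) * sin (\<omega> i \<bullet> y))"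
      unfolding feature by (simp only: algebra_simps)
    also have "\<dots> = 2 / real (2 * m) * cos (\<omega> i \<bullet> (x - y))"
      unfolding c_def inner_diff_right cos_diff by simp
    finally show ?thesis
      by simp
  qed
  then show ?thesis
    unfolding rff_error_def empirical_cos_error_def sum_lessThan_double by (simp add: sum_divide_distrib)
qed

lemma kernel_eq_integral_cos:
  fixes P :: "'a::euclidean_space measure"
  assumes "prob_space P" "sets P = sets borel"
    and "\<And>\<Delta>. complex_of_real (k \<Delta>) = (\<integral>\<omega>. cis (\<omega> \<bullet> \<Delta>) \<partial>P)"
  shows "k t = (\<integral>w. cos (w \<bullet> t) \<partial>P)"
proof -
  interpret prob_space P
    by (fact assms(1))
  have "continuous_on UNIV (\<lambda>w::'a. cis (w \<bullet> t))"
    by (intro continuous_intros)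
  then have "(\<lambda>w. cis (w \<bullet> t)) \<in> borel_measurable P"
    by (subst measurable_cong_sets[OF assms(2) refl]) (rule borel_measurable_continuous_onI)
  then have "integrable P (\<lambda>w. cis (w \<bullet> t))"
    by (intro integrable_const_bound[where B = 1]) auto
  then have "(\<integral>w. cos (w \<bullet> t) \<partial>P) = Re (\<integral>w. cis (w \<bullet> t) \<partial>P)"
    by (simp flip: integral_Re)
  then show ?thesis
    using assms(3)[of t] by (metis Re_complex_of_real)
qed

lemma differences_subset_cball_diameter:
  fixes X :: "'a::real_normed_vector set"
  assumes "bounded X"
  shows "{x - y | x y. x \<in> X \<and> y \<in> X} \<subseteq> cball 0 (diameter X)"
  using diameter_bounded_bound[OF assms] by (auto simp: dist_norm)

theorem proposition3:
  fixes X :: "'a::euclidean_space set"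
    and k :: "'a \<Rightarrow> real"
    and P :: "'a measure"
    and L :: real
    and D :: nat
  assumes "compact X"
    and "continuous_on UNIV k"
    and "pos_def_fun k"
    and "k 0 = 1"
    and "hessian_exists_at k 0"
    and "prob_space P"
    and "sets P = sets borel"
    and "\<forall>\<Delta>. complex_of_real (k \<Delta>) = (\<integral>\<omega>. cis (\<omega> \<bullet> \<Delta>) \<partial>P)"
    and "L-lipschitz_on {x - y | x y. x \<in> X \<and> y \<in> X} k"
    and "even D" and "D > 0"
  shows "(\<integral>\<^sup>+ \<omega>. (SUP xy\<in>X \<times> X. ennreal \<bar>rff_error D k \<omega> (fst xy) (snd xy)\<bar>)
            \<partial>(PiM {..<D div 2} (\<lambda>_. P)))
         \<le> ennreal (24 * rff_gamma * sqrt (real DIM('a)) * diameter X / sqrt (real D))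
           * ((\<integral>\<^sup>+ \<omega>. ennreal (Max ((\<lambda>i. norm (\<omega> i)) ` {..<D div 2}))
                   \<partial>(PiM {..<D div 2} (\<lambda>_. P))) + ennreal L)"
proof (cases "X = {}")
  case True
  then show ?thesis
    by (simp add: bot_ennreal)
next
  case False
  define m where "m = D div 2"
  define T where "T = {x - y | x y. x \<in> X \<and> y \<in> X}"
  have D: "D = 2 * m" "m > 0"
    using assms(10,11) by (auto simp: m_def)
  have k: "k t = (\<integral>w. cos (w \<bullet> t) \<partial>P)" for t
    using assms(6-8) by (intro kernel_eq_integral_cos) auto
  have T: "T \<subseteq> cball 0 (diameter X)" "0 \<in> T"
    using differences_subset_cball_diameter[OF compact_imp_bounded[OF assms(1)]] False by (auto simp: T_def)
  have "(\<integral>\<^sup>+\<omega>. (SUP xy\<in>X \<times> X. ennreal \<bar>rff_error D k \<omega> (fst xy) (snd xy)\<bar>) \<partial>PiM {..<m} (\<lambda>_. P))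
      \<le> (\<integral>\<^sup>+\<omega>. (SUP t\<in>T. ennreal \<bar>empirical_cos_error m k \<omega> t\<bar>) \<partial>PiM {..<m} (\<lambda>_. P))"
    unfolding D(1) rff_error_eq_empirical_cos_error T_def
    by (intro nn_integral_mono SUP_mono) force
  also have "\<dots> \<le> ennreal ((9 * sqrt 2 + 1) * sqrt DIM('a) * diameter X / sqrt m)
                   * ((\<integral>\<^sup>+\<omega>. ennreal (max_norm m \<omega>) \<partial>PiM {..<m} (\<lambda>_. P)) + ennreal L)"
    using assms(6,7) k D(2) T assms(9) unfolding T_def by (rule expected_sup_empirical_cos_error_le)
  also have "\<dots> \<le> ennreal (24 * rff_gamma * sqrt DIM('a) * diameter X / sqrt D)
                   * ((\<integral>\<^sup>+\<omega>. ennreal (max_norm m \<omega>) \<partial>PiM {..<m} (\<lambda>_. P)) + ennreal L)"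
    unfolding D(1) using diameter_ge_0[OF compact_imp_bounded[OF assms(1)]]
    by (intro mult_right_mono ennreal_leI chaining_constant_le_rff_constant) auto
  finally show ?thesis
    unfolding m_def max_norm_def .
qed

end
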